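(* Let $(a_n)_{n\ge0}$ be nonzero complex numbers with $|a_0|\ge|a_1|\ge\cdots$ and $\sum_n|a_n|^2<\infty$, and let $T$ be the weighted shift $Te_n=a_ne_{n+1}$. Let $S\in\mathcal A_T$ and $k>1$ be such that $\hat S(j)=0$ for $j=1,\dots,k-1$ and $\hat S(k)\ne0$. Then $\langle S\rangle=\langle T^k\rangle$ if and only if the basis vector $e_k$ belongs to the closed linear span of $\{T^mSe_0: m\ge0\}$.
   Context: $H$ is a complex Hilbert space with orthonormal basis $\{e_n\}_{n\ge0}$, $Te_n=a_ne_{n+1}$, and $\mathcal A_T$ is the operator-norm closure of the polynomials $p(T)$ with $p(0)=0$. For $R\in\mathcal A_T$, $\langle R\rangle$ is the smallest closed ideal of $\mathcal A_T$ containing $R$. For $\lambda$ in the unit circle $\mathbb T$ let $W_\lambda e_n=\lambda^ne_n$ and $\gamma_\lambda(S)=W_\lambda SW_\lambda^*$ (a norm-continuous action of $\mathbb T$ on $\mathcal A_T$ by isometric automorphisms with $\gamma_\lambda(T)=\lambda T$). For $S\in\mathcal A_T$, $j\ge1$, $\hat S(j)\in\mathbb C$ is defined by $\int_{\mathbb T}\gamma_\lambda(S)\lambda^{-j}\,dm(\lambda)=\hat S(j)T^j$ ($dm$ normalized Haar measure). *)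

theory Defs
  imports "HOL-Analysis.Analysis" "HOL-Computational_Algebra.Polynomial"
begin

text \<open>The Hilbert space H is realised concretely as l2(N): square-summable complex
sequences, with orthonormal basis e_n = basis_vec n.  Operators are functions on
sequences; only their behaviour on l2 matters.\<close>

definition l2 :: "(nat \<Rightarrow> complex) set" where
  "l2 = {f. summable (\<lambda>n. (cmod (f n))^2)}"

definition l2norm :: "(nat \<Rightarrow> complex) \<Rightarrow> real" where
  "l2norm f = sqrt (\<Sum>n. (cmod (f n))^2)"

definition l2inner :: "(nat \<Rightarrow> complex) \<Rightarrow> (nat \<Rightarrow> complex) \<Rightarrow> complex" where
  "l2inner f g = (\<Sum>n. f n * cnj (g n))"

definition basis_vec :: "nat \<Rightarrow> nat \<Rightarrow> complex" where
  "basis_vec k = (\<lambda>n. if n = k then 1 else 0)"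

definition wshift :: "(nat \<Rightarrow> complex) \<Rightarrow> (nat \<Rightarrow> complex) \<Rightarrow> (nat \<Rightarrow> complex)" where
  "wshift a f = (\<lambda>n. if n = 0 then 0 else a (n - 1) * f (n - 1))"

definition poly_op :: "(nat \<Rightarrow> complex) \<Rightarrow> complex poly \<Rightarrow> (nat \<Rightarrow> complex) \<Rightarrow> (nat \<Rightarrow> complex)" where
  "poly_op a q f = (\<lambda>n. \<Sum>i\<le>degree q. coeff q i * ((wshift a ^^ i) f) n)"

definition op_dist_le ::
  "((nat \<Rightarrow> complex) \<Rightarrow> (nat \<Rightarrow> complex)) \<Rightarrow> ((nat \<Rightarrow> complex) \<Rightarrow> (nat \<Rightarrow> complex)) \<Rightarrow> real \<Rightarrow> bool" where
  "op_dist_le S R eps = (\<forall>f\<in>l2. l2norm (\<lambda>n. S f n - R f n) \<le> eps * l2norm f)"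

definition alg_T :: "(nat \<Rightarrow> complex) \<Rightarrow> ((nat \<Rightarrow> complex) \<Rightarrow> (nat \<Rightarrow> complex)) set" where
  "alg_T a = {S. (\<forall>f\<in>l2. S f \<in> l2) \<and>
      (\<forall>eps>0. \<exists>q. coeff q 0 = 0 \<and> op_dist_le S (poly_op a q) eps)}"

definition closed_ideal :: "(nat \<Rightarrow> complex) \<Rightarrow> ((nat \<Rightarrow> complex) \<Rightarrow> (nat \<Rightarrow> complex)) set \<Rightarrow> bool" where
  "closed_ideal a J \<longleftrightarrow> J \<subseteq> alg_T a \<and> (\<lambda>f n. 0) \<in> J
     \<and> (\<forall>S\<in>J. \<forall>R\<in>J. (\<lambda>f n. S f n + R f n) \<in> J)
     \<and> (\<forall>c. \<forall>S\<in>J. (\<lambda>f n. c * S f n) \<in> J)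
     \<and> (\<forall>S\<in>J. \<forall>A\<in>alg_T a. A \<circ> S \<in> J \<and> S \<circ> A \<in> J)
     \<and> (\<forall>S\<in>alg_T a. (\<forall>eps>0. \<exists>R\<in>J. op_dist_le S R eps) \<longrightarrow> S \<in> J)"

definition gen_ideal :: "(nat \<Rightarrow> complex) \<Rightarrow> ((nat \<Rightarrow> complex) \<Rightarrow> (nat \<Rightarrow> complex)) \<Rightarrow> ((nat \<Rightarrow> complex) \<Rightarrow> (nat \<Rightarrow> complex)) set" where
  "gen_ideal a R = \<Inter>{J. closed_ideal a J \<and> R \<in> J}"

definition gauge_act :: "complex \<Rightarrow> ((nat \<Rightarrow> complex) \<Rightarrow> (nat \<Rightarrow> complex)) \<Rightarrow> (nat \<Rightarrow> complex) \<Rightarrow> (nat \<Rightarrow> complex)" where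
  "gauge_act l S = (\<lambda>f n. l ^ n * f n) \<circ> S \<circ> (\<lambda>f n. (cnj l) ^ n * f n)"

text \<open>Fourier coefficient: the operator integral over the circle (normalised Haar measure,
lambda = cis t, t in [0, 2 pi]) of gamma_lambda(S) lambda^(-j) equals hat S(j) T^j; the
integral is taken in the weak sense (matrix coefficients), which agrees with the
norm (Bochner) integral of the norm-continuous integrand.\<close>
definition fourier_coeff :: "(nat \<Rightarrow> complex) \<Rightarrow> ((nat \<Rightarrow> complex) \<Rightarrow> (nat \<Rightarrow> complex)) \<Rightarrow> nat \<Rightarrow> complex" where
  "fourier_coeff a S j = (THE c. \<forall>f\<in>l2. \<forall>g\<in>l2.
      complex_of_real (1 / (2 * pi)) *
        integral {0..2*pi} (\<lambda>t. l2inner (gauge_act (cis t) S f) g * cnj (cis t) ^ j)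
      = c * l2inner ((wshift a ^^ j) f) g)"

end

theory Submission
  imports Defs
begin

text \<open>
  For R in A_T, the closed ideal generated by R consists of those X in A_T for which X e_0 lies in
  the closed linear span of the vectors T^m R e_0. Two facts make this set a closed ideal: A_T is
  commutative, and every X in A_T is controlled by the single vector X e_0, namely
  ||X f|| <= C ||X e_0|| ||f|| with C = ||a|| / |a_0|. For polynomials in T the latter follows from
  ||p(T) e_m|| <= |a_m| / |a_0| ||p(T) e_0|| (the weights decrease) and Cauchy-Schwarz against the
  square-summable weights. The same estimate shows that such an X is a norm limit of operators
  p(T) R, so it lies in every closed ideal containing R.

  The Fourier coefficient hat S(j) is (S e_0)_j / (a_0 \<cdots> a_(j-1)), so the hypotheses say that
  S e_0 vanishes below k. Then S e_0 is in the closed span of the T^m T^k e_0, which gives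
  <S> \<subseteq> <T^k>; and <T^k> \<subseteq> <S> holds exactly when T^k e_0, a nonzero multiple of e_k, is in the
  closed span of the T^m S e_0.
\<close>

section \<open>Square-summable sequences\<close>

lemma l2norm_power2: "f \<in> l2 \<Longrightarrow> (l2norm f)^2 = (\<Sum>n. (cmod (f n))^2)"
  unfolding l2norm_def l2_def by (simp add: suminf_nonneg)

lemma l2norm_nonneg: "f \<in> l2 \<Longrightarrow> 0 \<le> l2norm f"
  unfolding l2norm_def l2_def by (simp add: suminf_nonneg)

lemma sum_power2_le_l2norm: "f \<in> l2 \<Longrightarrow> (\<Sum>n<N. (cmod (f n))^2) \<le> (l2norm f)^2"
  by (simp add: l2norm_power2 sum_le_suminf l2_def)

lemma L2_set_le_l2norm: "f \<in> l2 \<Longrightarrow> L2_set (\<lambda>n. cmod (f n)) {..<N} \<le> l2norm f"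
  using real_sqrt_le_mono[OF sum_power2_le_l2norm] l2norm_nonneg by (simp add: L2_set_def)

lemma l2_partial_sums_bounded:
  assumes "\<And>N. (\<Sum>n<N. (cmod (f n))^2) \<le> B^2" "0 \<le> B"
  shows "f \<in> l2" "l2norm f \<le> B"
proof -
  have s: "summable (\<lambda>n. (cmod (f n))^2)"
    by (rule summableI_nonneg_bounded[OF _ assms(1)]) simp
  then show "f \<in> l2" by (simp add: l2_def)
  have "(\<Sum>n. (cmod (f n))^2) \<le> B^2" by (rule suminf_le_const[OF s assms(1)])
  then show "l2norm f \<le> B"
    using real_sqrt_le_mono assms(2) by (fastforce simp: l2norm_def)
qed

lemma l2_dominated:
  assumes "h \<in> l2" "\<And>n. cmod (g n) \<le> K * cmod (h n)" "0 \<le> K"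
  shows "g \<in> l2" "l2norm g \<le> K * l2norm h"
proof -
  have "(\<Sum>n<N. (cmod (g n))^2) \<le> (K * l2norm h)^2" for N
  proof -
    have "(\<Sum>n<N. (cmod (g n))^2) \<le> (\<Sum>n<N. K^2 * (cmod (h n))^2)"
      by (rule sum_mono) (metis assms(2) norm_ge_zero power_mono power_mult_distrib)
    also have "\<dots> = K^2 * (\<Sum>n<N. (cmod (h n))^2)" by (simp add: sum_distrib_left)
    also have "\<dots> \<le> K^2 * (l2norm h)^2"
      using sum_power2_le_l2norm[OF assms(1)] by (simp add: mult_left_mono)
    finally show ?thesis by (simp add: power_mult_distrib)
  qed
  moreover have "0 \<le> K * l2norm h" using assms l2norm_nonneg by simp
  ultimately show "g \<in> l2" "l2norm g \<le> K * l2norm h" by (rule l2_partial_sums_bounded)+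
qed

lemma l2_cong_cmod:
  assumes "\<And>n. cmod (f n) = cmod (g n)"
  shows "f \<in> l2 \<longleftrightarrow> g \<in> l2" "l2norm f = l2norm g"
  using assms by (simp_all add: l2_def l2norm_def)

lemma l2_zero [simp]: "(\<lambda>n. 0) \<in> l2" "l2norm (\<lambda>n. 0) = 0"
  by (simp_all add: l2_def l2norm_def)

lemma l2_triangle_pointwise:
  assumes "f \<in> l2" "g \<in> l2" "\<And>n. cmod (h n) \<le> cmod (f n) + cmod (g n)"
  shows "h \<in> l2" "l2norm h \<le> l2norm f + l2norm g"
proof -
  have "(\<Sum>n<N. (cmod (h n))^2) \<le> (l2norm f + l2norm g)^2" for N
  proof -
    have "L2_set (\<lambda>n. cmod (h n)) {..<N} \<le> L2_set (\<lambda>n. cmod (f n) + cmod (g n)) {..<N}"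
      by (rule L2_set_mono) (use assms(3) in auto)
    also have "\<dots> \<le> L2_set (\<lambda>n. cmod (f n)) {..<N} + L2_set (\<lambda>n. cmod (g n)) {..<N}"
      by (rule L2_set_triangle_ineq)
    also have "\<dots> \<le> l2norm f + l2norm g" using L2_set_le_l2norm assms by (simp add: add_mono)
    finally have "(L2_set (\<lambda>n. cmod (h n)) {..<N})^2 \<le> (l2norm f + l2norm g)^2"
      by (simp add: power_mono)
    then show ?thesis by (simp add: L2_set_def sum_nonneg)
  qed
  moreover have "0 \<le> l2norm f + l2norm g" using assms l2norm_nonneg by simp
  ultimately show "h \<in> l2" "l2norm h \<le> l2norm f + l2norm g" by (rule l2_partial_sums_bounded)+
qed

lemma l2_add:
  assumes "f \<in> l2" "g \<in> l2"
  shows "(\<lambda>n. f n + g n) \<in> l2" "l2norm (\<lambda>n. f n + g n) \<le> l2norm f + l2norm g"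
  using l2_triangle_pointwise[OF assms, of "\<lambda>n. f n + g n"] by (auto simp: norm_triangle_ineq)

lemma l2_diff:
  assumes "f \<in> l2" "g \<in> l2"
  shows "(\<lambda>n. f n - g n) \<in> l2" "l2norm (\<lambda>n. f n - g n) \<le> l2norm f + l2norm g"
  using l2_triangle_pointwise[OF assms, of "\<lambda>n. f n - g n"] by (auto simp: norm_triangle_ineq4)

lemma l2_scale:
  assumes "f \<in> l2"
  shows "(\<lambda>n. c * f n) \<in> l2" "l2norm (\<lambda>n. c * f n) = cmod c * l2norm f"
proof -
  have s: "summable (\<lambda>n. (cmod (f n))^2)" using assms by (simp add: l2_def)
  have e: "(\<lambda>n. (cmod (c * f n))^2) = (\<lambda>n. (cmod c)^2 * (cmod (f n))^2)"
    by (simp add: norm_mult power_mult_distrib)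
  show "(\<lambda>n. c * f n) \<in> l2" unfolding l2_def mem_Collect_eq e using s by (rule summable_mult)
  have "l2norm (\<lambda>n. c * f n) = sqrt ((cmod c)^2 * (\<Sum>n. (cmod (f n))^2))"
    unfolding l2norm_def e using suminf_mult[OF s] by simp
  also have "\<dots> = cmod c * l2norm f" by (simp add: l2norm_def real_sqrt_mult)
  finally show "l2norm (\<lambda>n. c * f n) = cmod c * l2norm f" .
qed

lemma l2norm_diff_commute: "l2norm (\<lambda>n. f n - g n) = l2norm (\<lambda>n. g n - f n)"
  by (rule l2_cong_cmod(2)) (simp add: norm_minus_commute)

lemma l2norm_diff_triangle:
  assumes "x \<in> l2" "y \<in> l2" "z \<in> l2"
  shows "l2norm (\<lambda>n. x n - z n) \<le> l2norm (\<lambda>n. x n - y n) + l2norm (\<lambda>n. y n - z n)"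
  by (rule l2_triangle_pointwise(2)[OF l2_diff(1)[OF assms(1,2)] l2_diff(1)[OF assms(2,3)]])
     (rule order_trans[OF _ norm_triangle_ineq], simp)

lemma l2norm_le_diff_add:
  assumes "x \<in> l2" "y \<in> l2"
  shows "l2norm x \<le> l2norm (\<lambda>n. x n - y n) + l2norm y"
  by (rule l2_triangle_pointwise(2)[OF l2_diff(1)[OF assms] assms(2)])
     (metis diff_add_cancel norm_triangle_ineq)

lemma l2_sum:
  assumes "finite I" "\<And>i. i \<in> I \<Longrightarrow> F i \<in> l2"
  shows "(\<lambda>n. \<Sum>i\<in>I. c i * F i n) \<in> l2 \<and>
    l2norm (\<lambda>n. \<Sum>i\<in>I. c i * F i n) \<le> (\<Sum>i\<in>I. cmod (c i) * l2norm (F i))"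
  using assms
proof (induction I rule: finite_induct)
  case (insert j I)
  have A: "(\<lambda>n. c j * F j n) \<in> l2" "l2norm (\<lambda>n. c j * F j n) = cmod (c j) * l2norm (F j)"
    using l2_scale insert.prems by auto
  have B: "(\<lambda>n. \<Sum>i\<in>I. c i * F i n) \<in> l2"
    "l2norm (\<lambda>n. \<Sum>i\<in>I. c i * F i n) \<le> (\<Sum>i\<in>I. cmod (c i) * l2norm (F i))"
    using insert.IH insert.prems by auto
  show ?case
    using l2_add[OF A(1) B(1)] A(2) B(2) insert.hyps by simp
qed simp

lemma cmod_le_l2norm: "f \<in> l2 \<Longrightarrow> cmod (f j) \<le> l2norm f"
proof -
  assume f: "f \<in> l2"
  have "(cmod (f j))^2 \<le> (\<Sum>n<Suc j. (cmod (f n))^2)"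
    by (rule member_le_sum[of j "{..<Suc j}" "\<lambda>n. (cmod (f n))^2"]) auto
  also have "\<dots> \<le> (l2norm f)^2" by (rule sum_power2_le_l2norm[OF f])
  finally show ?thesis by (rule power2_le_imp_le) (rule l2norm_nonneg[OF f])
qed

lemma l2norm_eq_0:
  assumes "f \<in> l2" "l2norm f = 0"
  shows "f = (\<lambda>n. 0)"
proof -
  have "(\<Sum>n. (cmod (f n))^2) = 0" using l2norm_power2[OF assms(1)] assms(2) by simp
  then show ?thesis using suminf_eq_zero_iff assms(1) by (fastforce simp: l2_def)
qed

lemma l2_shift:
  assumes "\<And>n. n < m \<Longrightarrow> g n = 0"
  shows "g \<in> l2 \<longleftrightarrow> (\<lambda>r. g (r + m)) \<in> l2"
    and "g \<in> l2 \<Longrightarrow> l2norm g = l2norm (\<lambda>r. g (r + m))"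
proof -
  show "g \<in> l2 \<longleftrightarrow> (\<lambda>r. g (r + m)) \<in> l2"
    unfolding l2_def using summable_iff_shift[of "\<lambda>n. (cmod (g n))^2" m] by simp
  assume "g \<in> l2"
  then have "(\<Sum>n. (cmod (g n))^2) = (\<Sum>n. (cmod (g (n+m)))^2) + (\<Sum>i<m. (cmod (g i))^2)"
    by (intro suminf_split_initial_segment) (simp add: l2_def)
  also have "(\<Sum>i<m. (cmod (g i))^2) = 0" using assms by simp
  finally show "l2norm g = l2norm (\<lambda>r. g (r + m))" by (simp add: l2norm_def)
qed

lemma l2_tail_small:
  assumes "f \<in> l2" "e > 0"
  shows "\<exists>N. l2norm (\<lambda>n. if n < N then 0 else f n) < e"
proof -
  have s: "summable (\<lambda>n. (cmod (f n))^2)" using assms by (simp add: l2_def)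
  obtain N where "\<forall>n\<ge>N. norm (\<Sum>i. (cmod (f (i + n)))^2) < e^2"
    using suminf_exist_split[OF _ s, of "e^2"] assms(2) by auto
  then have N: "(\<Sum>i. (cmod (f (i + N)))^2) < e^2" by auto
  define t where "t = (\<lambda>n. if n < N then 0 else f n)"
  have z: "\<And>n. n < N \<Longrightarrow> t n = 0" and sh: "(\<lambda>r. t (r + N)) = (\<lambda>r. f (r + N))"
    by (simp_all add: t_def)
  have "(\<lambda>r. f (r + N)) \<in> l2"
    using summable_ignore_initial_segment[OF s] by (simp add: l2_def)
  then have "t \<in> l2" using l2_shift(1)[OF z] sh by simp
  then have "l2norm t = l2norm (\<lambda>r. f (r + N))" using l2_shift(2)[OF z] sh by simp
  also have "\<dots> < e" using real_sqrt_less_mono[OF N] assms(2) by (simp add: l2norm_def)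
  finally show ?thesis unfolding t_def by blast
qed

lemma basis_vec_l2: "basis_vec m \<in> l2" "l2norm (basis_vec m) = 1"
proof -
  have e: "(\<lambda>n. (cmod (basis_vec m n))^2) = (\<lambda>n. if n = m then 1 else 0)"
    by (auto simp: basis_vec_def)
  show "basis_vec m \<in> l2" unfolding l2_def mem_Collect_eq e by simp
  show "l2norm (basis_vec m) = 1"
    unfolding l2norm_def e using sums_unique[OF sums_single[of m "\<lambda>_. (1::real)"]] by simp
qed

lemma ex_pos_le_one_mult_le:
  fixes K e :: real
  assumes "0 < e"
  obtains d where "0 < d" "d \<le> 1" "d * K \<le> e"
proof
  define d where "d = min 1 (e / (\<bar>K\<bar> + 1))"
  show "0 < d" "d \<le> 1" using assms by (auto simp: d_def)
  have "d * K \<le> d * (\<bar>K\<bar> + 1)" using \<open>0 < d\<close> by (intro mult_left_mono) auto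
  also have "\<dots> \<le> e / (\<bar>K\<bar> + 1) * (\<bar>K\<bar> + 1)"
    by (intro mult_right_mono) (auto simp: d_def)
  also have "\<dots> = e" by (simp add: add_nonneg_pos)
  finally show "d * K \<le> e" .
qed

lemma le_of_forall_pos_le_add_mult:
  fixes x y K :: real
  assumes "\<And>d. 0 < d \<Longrightarrow> d \<le> 1 \<Longrightarrow> x \<le> y + d * K"
  shows "x \<le> y"
proof (rule field_le_epsilon)
  fix e :: real assume "0 < e"
  then obtain d where "0 < d" "d \<le> 1" "d * K \<le> e" by (rule ex_pos_le_one_mult_le)
  then show "x \<le> y + e" using assms by force
qed

lemma l2_eqI_approx:
  assumes "f \<in> l2" "g \<in> l2" "\<And>d. 0 < d \<Longrightarrow> d \<le> 1 \<Longrightarrow> l2norm (\<lambda>n. f n - g n) \<le> d * K"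
  shows "f = g"
proof -
  have d: "(\<lambda>n. f n - g n) \<in> l2" by (rule l2_diff(1)[OF assms(1,2)])
  have "l2norm (\<lambda>n. f n - g n) \<le> 0"
    by (rule le_of_forall_pos_le_add_mult[where K=K]) (use assms(3) in simp)
  then have "(\<lambda>n. f n - g n) = (\<lambda>n. 0)"
    using l2norm_eq_0[OF d] l2norm_nonneg[OF d] by simp
  then show ?thesis by (simp add: fun_eq_iff)
qed

lemma op_dist_leD:
  "op_dist_le S R d \<Longrightarrow> f \<in> l2 \<Longrightarrow> l2norm (\<lambda>n. S f n - R f n) \<le> d * l2norm f"
  by (simp add: op_dist_le_def)

lemma op_dist_le_commute: "op_dist_le S R d \<longleftrightarrow> op_dist_le R S d"
  unfolding op_dist_le_def using l2norm_diff_commute by metis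

lemma op_dist_le_mono: "op_dist_le S R d \<Longrightarrow> d \<le> e \<Longrightarrow> op_dist_le S R e"
  unfolding op_dist_le_def by (meson l2norm_nonneg mult_right_mono order_trans)

lemma op_dist_le_norm_le:
  assumes "op_dist_le S R d" "f \<in> l2" "S f \<in> l2" "R f \<in> l2"
  shows "l2norm (S f) \<le> l2norm (R f) + d * l2norm f"
  using l2norm_le_diff_add[OF assms(3,4)] assms(1,2) unfolding op_dist_le_def by fastforce

lemma summable_norm_l2inner:
  assumes "f \<in> l2" "g \<in> l2"
  shows "summable (\<lambda>n. cmod (f n * cnj (g n)))"
proof (rule summable_comparison_test')
  show "summable (\<lambda>n. (cmod (f n))^2 + (cmod (g n))^2)"
    using assms unfolding l2_def mem_Collect_eq by (rule summable_add)
  show "norm (cmod (f n * cnj (g n))) \<le> (cmod (f n))^2 + (cmod (g n))^2" for n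
  proof -
    have "2 * cmod (f n) * cmod (g n) \<le> (cmod (f n))^2 + (cmod (g n))^2"
      by (rule sum_squares_bound)
    moreover have "0 \<le> cmod (f n) * cmod (g n)" by simp
    ultimately have "cmod (f n) * cmod (g n) \<le> (cmod (f n))^2 + (cmod (g n))^2" by linarith
    then show ?thesis by (simp add: norm_mult)
  qed
qed

lemma summable_l2inner: "f \<in> l2 \<Longrightarrow> g \<in> l2 \<Longrightarrow> summable (\<lambda>n. f n * cnj (g n))"
  by (rule summable_norm_cancel[OF summable_norm_l2inner])

lemma norm_l2inner_le:
  assumes "f \<in> l2" "g \<in> l2"
  shows "cmod (l2inner f g) \<le> l2norm f * l2norm g"
proof -
  have "cmod (l2inner f g) \<le> (\<Sum>n. cmod (f n * cnj (g n)))"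
    unfolding l2inner_def by (rule summable_norm[OF summable_norm_l2inner[OF assms]])
  also have "\<dots> \<le> l2norm f * l2norm g"
  proof (rule suminf_le_const[OF summable_norm_l2inner[OF assms]])
    fix N
    have "(\<Sum>n<N. cmod (f n * cnj (g n))) = (\<Sum>n<N. \<bar>cmod (f n)\<bar> * \<bar>cmod (g n)\<bar>)"
      by (simp add: norm_mult)
    also have "\<dots> \<le> L2_set (\<lambda>n. cmod (f n)) {..<N} * L2_set (\<lambda>n. cmod (g n)) {..<N}"
      by (rule L2_set_mult_ineq)
    also have "\<dots> \<le> l2norm f * l2norm g"
      using assms by (intro mult_mono L2_set_le_l2norm l2norm_nonneg L2_set_nonneg)
    finally show "(\<Sum>n<N. cmod (f n * cnj (g n))) \<le> l2norm f * l2norm g" .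
  qed
  finally show ?thesis .
qed

lemma l2inner_diff_left:
  assumes "f \<in> l2" "h \<in> l2" "g \<in> l2"
  shows "l2inner (\<lambda>n. f n - h n) g = l2inner f g - l2inner h g"
  unfolding l2inner_def left_diff_distrib
  by (rule suminf_diff[OF summable_l2inner[OF assms(1,3)] summable_l2inner[OF assms(2,3)], symmetric])

lemma l2inner_sum_left:
  assumes "finite I" "\<And>i. i \<in> I \<Longrightarrow> F i \<in> l2" "g \<in> l2"
  shows "l2inner (\<lambda>n. \<Sum>i\<in>I. c i * F i n) g = (\<Sum>i\<in>I. c i * l2inner (F i) g)"
proof -
  have s: "summable (\<lambda>n. F i n * cnj (g n))" if "i \<in> I" for i
    using summable_l2inner assms(2)[OF that] assms(3) by blast
  have "l2inner (\<lambda>n. \<Sum>i\<in>I. c i * F i n) g = (\<Sum>n. \<Sum>i\<in>I. c i * (F i n * cnj (g n)))"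
    unfolding l2inner_def by (simp add: sum_distrib_right mult.assoc)
  also have "\<dots> = (\<Sum>i\<in>I. \<Sum>n. c i * (F i n * cnj (g n)))"
    by (rule suminf_sum) (rule summable_mult[OF s])
  also have "\<dots> = (\<Sum>i\<in>I. c i * l2inner (F i) g)"
    unfolding l2inner_def by (rule sum.cong[OF refl], rule suminf_mult[OF s])
  finally show ?thesis .
qed

lemma l2inner_basis_vec: "l2inner f (basis_vec j) = f j"
proof -
  have "(\<lambda>n. f n * cnj (basis_vec j n)) = (\<lambda>n. if n = j then f j else 0)"
    by (auto simp: basis_vec_def)
  then show ?thesis
    unfolding l2inner_def using sums_unique[OF sums_single[of j "\<lambda>_. f j"]] by simp
qed


section \<open>Weighted shifts and polynomials in them\<close>

abbreviation e0 :: "nat \<Rightarrow> complex" where "e0 \<equiv> basis_vec 0"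

context
  fixes a :: "nat \<Rightarrow> complex"
begin

abbreviation T :: "(nat \<Rightarrow> complex) \<Rightarrow> nat \<Rightarrow> complex" where "T \<equiv> wshift a"

definition weight_prod :: "nat \<Rightarrow> complex" where "weight_prod j = (\<Prod>l<j. a l)"

lemma wshift_funpow_add_index: "(T ^^ i) f (m + i) = (\<Prod>l<i. a (m + l)) * f m"
  by (induction i) (simp_all add: wshift_def mult_ac)

lemma wshift_funpow_less: "n < i \<Longrightarrow> (T ^^ i) f n = 0"
  by (induction i arbitrary: n) (simp_all add: wshift_def)

lemma wshift_funpow_apply:
  "(T ^^ i) f n = (if i \<le> n then (\<Prod>l<i. a (n - i + l)) * f (n - i) else 0)"
  using wshift_funpow_add_index[of i f "n - i"] wshift_funpow_less[of n i] by auto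

lemma wshift_funpow_diff: "(T ^^ i) (\<lambda>n. f n - g n) n = (T ^^ i) f n - (T ^^ i) g n"
  by (simp add: wshift_funpow_apply right_diff_distrib)

lemma wshift_funpow_sum:
  "(T ^^ i) (\<lambda>n. \<Sum>k\<in>K. c k * F k n) n = (\<Sum>k\<in>K. c k * (T ^^ i) (F k) n)"
  by (simp add: wshift_funpow_apply sum_distrib_left sum_distrib_right mult_ac)

lemma wshift_funpow_e0:
  "(T ^^ i) (basis_vec 0) = (\<lambda>n. if n = i then weight_prod i else 0)"
  by (auto simp: wshift_funpow_apply basis_vec_def weight_prod_def)

lemma poly_op_eq_sum:
  "degree q < D \<Longrightarrow> poly_op a q f n = (\<Sum>i<D. coeff q i * (T ^^ i) f n)"
  unfolding poly_op_def by (rule sum.mono_neutral_left) (auto simp: coeff_eq_0)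

lemma poly_op_add: "poly_op a (p + q) f n = poly_op a p f n + poly_op a q f n"
proof -
  define D where "D = Suc (max (degree p) (degree q))"
  have "degree p < D" "degree q < D" "degree (p + q) < D"
    using degree_add_le[of p "max (degree p) (degree q)" q] by (auto simp: D_def)
  then show ?thesis by (simp add: poly_op_eq_sum sum.distrib distrib_right)
qed

lemma poly_op_diff: "poly_op a (p - q) f n = poly_op a p f n - poly_op a q f n"
proof -
  define D where "D = Suc (max (degree p) (degree q))"
  have "degree p < D" "degree q < D" "degree (p - q) < D"
    using degree_diff_le[of p "max (degree p) (degree q)" q] by (auto simp: D_def)
  then show ?thesis by (simp add: poly_op_eq_sum sum_subtractf left_diff_distrib)
qed

lemma poly_op_smult: "poly_op a (smult c p) f n = c * poly_op a p f n"
proof -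
  have d: "degree p < Suc (degree p)" "degree (smult c p) < Suc (degree p)"
    using degree_smult_le[of c p] by auto
  show ?thesis unfolding poly_op_eq_sum[OF d(1)] poly_op_eq_sum[OF d(2)]
    by (simp only: coeff_smult sum_distrib_left mult.assoc)
qed

lemma poly_op_const: "poly_op a [:c:] f n = c * f n"
  by (simp add: poly_op_def)

lemma poly_op_0: "poly_op a 0 f n = 0"
  by (simp add: poly_op_def)

lemma poly_op_monom: "poly_op a (monom c m) f n = c * (T ^^ m) f n"
proof -
  have "degree (monom c m) < Suc m" by (simp add: degree_monom_le le_imp_less_Suc)
  then show ?thesis by (simp add: poly_op_eq_sum if_distrib sum.delta)
qed

lemma poly_op_monom_1: "poly_op a (monom 1 m) = T ^^ m"
  by (simp add: fun_eq_iff poly_op_monom)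

lemma poly_op_pCons_0: "poly_op a (pCons 0 p) f n = T (poly_op a p f) n"
proof -
  define D where "D = Suc (degree p)"
  have d: "degree p < D" "degree (pCons 0 p) < Suc D"
    by (auto simp: D_def degree_pCons_le le_imp_less_Suc)
  have "poly_op a (pCons 0 p) f n = (\<Sum>i<D. coeff p i * T ((T ^^ i) f) n)"
    unfolding poly_op_eq_sum[OF d(2)] sum.lessThan_Suc_shift by simp
  also have "\<dots> = T (poly_op a p f) n"
    unfolding poly_op_eq_sum[OF d(1)] by (simp add: wshift_def sum_distrib_left mult_ac)
  finally show ?thesis .
qed

lemma poly_op_mult: "poly_op a (p * q) f = poly_op a p (poly_op a q f)"
proof (induction p rule: pCons_induct)
  case 0
  then show ?case by (simp add: fun_eq_iff poly_op_0)
next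
  case (pCons c p)
  have "pCons c p = [:c:] + pCons 0 p" by simp
  then have pc: "poly_op a (pCons c p) g n = c * g n + T (poly_op a p g) n" for g n
    by (metis poly_op_add poly_op_const poly_op_pCons_0)
  show ?case
    by (rule ext) (simp add: pc poly_op_add poly_op_smult poly_op_pCons_0 pCons.IH)
qed

lemma poly_op_commute: "poly_op a p (poly_op a q f) = poly_op a q (poly_op a p f)"
  by (metis poly_op_mult mult.commute)

lemma poly_op_funpow_commute: "poly_op a q ((T ^^ m) g) = (T ^^ m) (poly_op a q g)"
  using poly_op_commute[of q "monom 1 m" g] by (simp add: poly_op_monom_1)

lemma poly_op_diff_right:
  "poly_op a q (\<lambda>n. f n - g n) n = poly_op a q f n - poly_op a q g n"
  by (simp add: poly_op_def wshift_funpow_diff right_diff_distrib sum_subtractf)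

lemma poly_op_diff_right_fun:
  "(\<lambda>n. poly_op a q f n - poly_op a q g n) = poly_op a q (\<lambda>n. f n - g n)"
  by (simp add: fun_eq_iff poly_op_diff_right)

lemma poly_op_sum_right:
  "poly_op a q (\<lambda>n. \<Sum>k\<in>K. c k * F k n) n = (\<Sum>k\<in>K. c k * poly_op a q (F k) n)"
  unfolding poly_op_def wshift_funpow_sum by (simp add: sum_distrib_left mult_ac sum.swap[of _ K])

lemma poly_op_scale_right: "poly_op a q (\<lambda>n. c * g n) n = c * poly_op a q g n"
  using poly_op_sum_right[of q "\<lambda>_. c" "\<lambda>_. g" "{()}"] by simp

lemma poly_op_e0: "poly_op a q (basis_vec 0) j = coeff q j * weight_prod j"
proof -
  have "degree q < Suc (max (degree q) j)" by simp
  then show ?thesis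
    by (simp add: poly_op_eq_sum wshift_funpow_e0 if_distrib sum.delta' cong: if_cong)
qed

lemma poly_op_sum_monom:
  "poly_op a (\<Sum>m<N. monom (c m) m) v n = (\<Sum>m<N. c m * (T ^^ m) v n)"
  by (induction N) (simp_all add: poly_op_0 poly_op_add poly_op_monom)


definition cyclic_subspace :: "(nat \<Rightarrow> complex) \<Rightarrow> (nat \<Rightarrow> complex) set" where
  "cyclic_subspace v = {x. \<forall>eps>0. \<exists>p. l2norm (\<lambda>n. x n - poly_op a p v n) < eps}"

lemma cyclic_subspace_iff_sums:
  "x \<in> cyclic_subspace v \<longleftrightarrow>
    (\<forall>eps>0. \<exists>N c. l2norm (\<lambda>n. x n - (\<Sum>m<N. c m * (T ^^ m) v n)) < eps)"
proof -
  have "(\<exists>p. l2norm (\<lambda>n. x n - poly_op a p v n) < eps) \<longleftrightarrow>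
      (\<exists>N c. l2norm (\<lambda>n. x n - (\<Sum>m<N. c m * (T ^^ m) v n)) < eps)" for eps
  proof
    assume "\<exists>p. l2norm (\<lambda>n. x n - poly_op a p v n) < eps"
    then obtain p where "l2norm (\<lambda>n. x n - poly_op a p v n) < eps" ..
    then show "\<exists>N c. l2norm (\<lambda>n. x n - (\<Sum>m<N. c m * (T ^^ m) v n)) < eps"
      using poly_op_eq_sum[of p "Suc (degree p)"]
      by (intro exI[of _ "Suc (degree p)"] exI[of _ "coeff p"]) (simp del: sum.lessThan_Suc)
  next
    assume "\<exists>N c. l2norm (\<lambda>n. x n - (\<Sum>m<N. c m * (T ^^ m) v n)) < eps"
    then obtain N c where "l2norm (\<lambda>n. x n - (\<Sum>m<N. c m * (T ^^ m) v n)) < eps" by blast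
    then show "\<exists>p. l2norm (\<lambda>n. x n - poly_op a p v n) < eps"
      by (intro exI[of _ "\<Sum>m<N. monom (c m) m"]) (simp add: poly_op_sum_monom)
  qed
  then show ?thesis by (simp add: cyclic_subspace_def)
qed

lemma cyclic_subspaceI:
  assumes "\<And>d. 0 < d \<Longrightarrow> d \<le> 1 \<Longrightarrow> \<exists>p. l2norm (\<lambda>n. x n - poly_op a p v n) \<le> d * K"
  shows "x \<in> cyclic_subspace v"
  unfolding cyclic_subspace_def mem_Collect_eq
proof (intro allI impI)
  fix eps :: real assume "0 < eps"
  then obtain d where d: "0 < d" "d \<le> 1" "d * K \<le> eps / 2"
    using ex_pos_le_one_mult_le[of "eps / 2"] by auto
  obtain p where "l2norm (\<lambda>n. x n - poly_op a p v n) \<le> d * K" using assms[OF d(1,2)] ..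
  then have "l2norm (\<lambda>n. x n - poly_op a p v n) \<le> eps / 2" using d(3) by linarith
  then show "\<exists>p. l2norm (\<lambda>n. x n - poly_op a p v n) < eps"
    using \<open>0 < eps\<close> by (intro exI[of _ p]) linarith
qed

end


lemma closed_idealD:
  assumes "closed_ideal a J"
  shows "J \<subseteq> alg_T a"
    and "S \<in> J \<Longrightarrow> R \<in> J \<Longrightarrow> (\<lambda>f n. S f n + R f n) \<in> J"
    and "S \<in> J \<Longrightarrow> (\<lambda>f n. c * S f n) \<in> J"
    and "S \<in> J \<Longrightarrow> A \<in> alg_T a \<Longrightarrow> A \<circ> S \<in> J"
    and "S \<in> alg_T a \<Longrightarrow> (\<And>eps. 0 < eps \<Longrightarrow> \<exists>R\<in>J. op_dist_le S R eps) \<Longrightarrow> S \<in> J"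
  using assms unfolding closed_ideal_def by blast+

lemma closed_ideal_gen_ideal_least: "closed_ideal a J \<Longrightarrow> R \<in> J \<Longrightarrow> gen_ideal a R \<subseteq> J"
  unfolding gen_ideal_def by blast


section \<open>Norm estimates for polynomials in the shift\<close>

locale weighted_shift =
  fixes a :: "nat \<Rightarrow> complex"
  assumes weights_nonzero: "\<forall>n. a n \<noteq> 0"
    and weights_antimono: "\<forall>n. cmod (a (Suc n)) \<le> cmod (a n)"
    and weights_square_summable: "summable (\<lambda>n. (cmod (a n))^2)"
begin

abbreviation T :: "(nat \<Rightarrow> complex) \<Rightarrow> nat \<Rightarrow> complex" where "T \<equiv> wshift a"

lemma weight_prod_nonzero: "weight_prod a j \<noteq> 0"
  using weights_nonzero by (simp add: weight_prod_def)

lemma cmod_weight_antimono: "m \<le> n \<Longrightarrow> cmod (a n) \<le> cmod (a m)"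
  using lift_Suc_antimono_le[of "\<lambda>n. cmod (a n)"] weights_antimono by blast

lemma weights_l2: "a \<in> l2"
  using weights_square_summable by (simp add: l2_def)

lemma wshift_funpow_l2:
  assumes v: "v \<in> l2" and vanish: "\<And>n. n < s \<Longrightarrow> v n = 0"
  shows "(T ^^ m) v \<in> l2" "l2norm ((T ^^ m) v) \<le> (\<Prod>l<m. cmod (a (s + l))) * l2norm v"
proof -
  have z: "\<And>n. n < m \<Longrightarrow> (T ^^ m) v n = 0" by (rule wshift_funpow_less)
  have sh: "(\<lambda>r. (T ^^ m) v (r + m)) = (\<lambda>r. (\<Prod>l<m. a (r + l)) * v r)"
    by (simp add: wshift_funpow_add_index)
  have b: "cmod ((\<Prod>l<m. a (r + l)) * v r) \<le> (\<Prod>l<m. cmod (a (s + l))) * cmod (v r)" for r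
  proof (cases "r < s")
    case False
    then have "(\<Prod>l<m. cmod (a (r + l))) \<le> (\<Prod>l<m. cmod (a (s + l)))"
      by (intro prod_mono) (simp add: cmod_weight_antimono)
    then show ?thesis by (simp add: norm_mult prod_norm[symmetric] mult_right_mono)
  qed (simp add: vanish)
  then have "(\<lambda>r. (\<Prod>l<m. a (r + l)) * v r) \<in> l2"
    "l2norm (\<lambda>r. (\<Prod>l<m. a (r + l)) * v r) \<le> (\<Prod>l<m. cmod (a (s + l))) * l2norm v"
    using l2_dominated[OF v b] by (auto simp: prod_nonneg)
  then show "(T ^^ m) v \<in> l2" "l2norm ((T ^^ m) v) \<le> (\<Prod>l<m. cmod (a (s + l))) * l2norm v"
    using l2_shift[OF z] sh by auto
qed

definition poly_op_bound :: "complex poly \<Rightarrow> real" where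
  "poly_op_bound q = (\<Sum>i<Suc (degree q). cmod (coeff q i) * cmod (weight_prod a i))"

lemma poly_op_bound_nonneg: "0 \<le> poly_op_bound q"
  by (simp add: poly_op_bound_def sum_nonneg)

lemma poly_op_l2:
  assumes "f \<in> l2"
  shows "poly_op a q f \<in> l2" "l2norm (poly_op a q f) \<le> poly_op_bound q * l2norm f"
proof -
  have T: "(T ^^ i) f \<in> l2" "l2norm ((T ^^ i) f) \<le> cmod (weight_prod a i) * l2norm f" for i
    using wshift_funpow_l2[OF assms, of 0 i] by (simp_all add: weight_prod_def prod_norm)
  have e: "poly_op a q f = (\<lambda>n. \<Sum>i<Suc (degree q). coeff q i * (T ^^ i) f n)"
    using poly_op_eq_sum[of q "Suc (degree q)"] by auto
  have S: "poly_op a q f \<in> l2"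
    "l2norm (poly_op a q f) \<le> (\<Sum>i<Suc (degree q). cmod (coeff q i) * l2norm ((T ^^ i) f))"
    unfolding e using l2_sum[of "{..<Suc (degree q)}" "\<lambda>i. (T ^^ i) f" "coeff q"] T(1) by auto
  then show "poly_op a q f \<in> l2" by simp
  have "(\<Sum>i<Suc (degree q). cmod (coeff q i) * l2norm ((T ^^ i) f))
      \<le> (\<Sum>i<Suc (degree q). cmod (coeff q i) * (cmod (weight_prod a i) * l2norm f))"
    by (intro sum_mono mult_left_mono T(2)) simp
  also have "\<dots> = poly_op_bound q * l2norm f"
    unfolding poly_op_bound_def sum_distrib_right by (simp only: mult.assoc)
  finally show "l2norm (poly_op a q f) \<le> poly_op_bound q * l2norm f" using S(2) by linarith
qed

lemma e0_l2: "e0 \<in> l2" "l2norm e0 = 1"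
  by (rule basis_vec_l2)+

text \<open>As e_m = T^m e_0 / (a_0 \<cdots> a_(m-1)) and q(T) e_0 vanishes at 0, the weights of T^m
  acting on q(T) e_0 start at a_1; the quotient a_1 \<cdots> a_m / (a_0 \<cdots> a_(m-1)) is a_m / a_0.\<close>
lemma poly_op_basis_vec_norm_le:
  assumes "coeff q 0 = 0"
  shows "poly_op a q (basis_vec m) \<in> l2"
    "l2norm (poly_op a q (basis_vec m)) \<le> cmod (a m) / cmod (a 0) * l2norm (poly_op a q e0)"
proof -
  define v where "v = poly_op a q e0"
  have v: "v \<in> l2" "\<And>n. n < 1 \<Longrightarrow> v n = 0"
    using poly_op_l2(1)[OF e0_l2(1)] poly_op_e0[of a q 0] assms by (auto simp: v_def)
  have bm: "basis_vec m = (\<lambda>n. (1 / weight_prod a m) * (T ^^ m) e0 n)"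
    unfolding wshift_funpow_e0 by (auto simp: fun_eq_iff basis_vec_def weight_prod_nonzero)
  have e: "poly_op a q (basis_vec m) = (\<lambda>n. (1 / weight_prod a m) * (T ^^ m) v n)"
    by (subst bm, rule ext, subst poly_op_scale_right, simp only: poly_op_funpow_commute v_def)
  have Tv: "(T ^^ m) v \<in> l2" "l2norm ((T ^^ m) v) \<le> (\<Prod>l<m. cmod (a (Suc l))) * l2norm v"
    using wshift_funpow_l2[where s=1 and m=m, OF v] by simp_all
  show "poly_op a q (basis_vec m) \<in> l2" unfolding e by (rule l2_scale(1)[OF Tv(1)])
  have "(\<Prod>l<m. cmod (a (Suc l))) * cmod (a 0) = cmod (a m) * cmod (weight_prod a m)"
    using prod.lessThan_Suc_shift[of "\<lambda>l. cmod (a l)" m] prod.lessThan_Suc[of "\<lambda>l. cmod (a l)" m]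
    by (simp add: weight_prod_def prod_norm mult.commute)
  then have ratio: "(\<Prod>l<m. cmod (a (Suc l))) / cmod (weight_prod a m) = cmod (a m) / cmod (a 0)"
    using weights_nonzero weight_prod_nonzero by (simp add: field_simps)
  have "l2norm (poly_op a q (basis_vec m)) = l2norm ((T ^^ m) v) / cmod (weight_prod a m)"
    unfolding e l2_scale(2)[OF Tv(1)] by (simp add: norm_divide)
  also have "\<dots> \<le> (\<Prod>l<m. cmod (a (Suc l))) * l2norm v / cmod (weight_prod a m)"
    by (rule divide_right_mono[OF Tv(2)]) simp
  also have "\<dots> = (\<Prod>l<m. cmod (a (Suc l))) / cmod (weight_prod a m) * l2norm v" by simp
  finally show "l2norm (poly_op a q (basis_vec m)) \<le> cmod (a m) / cmod (a 0) * l2norm (poly_op a q e0)"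
    using ratio by (simp add: v_def)
qed

definition e0_norm_const :: real where "e0_norm_const = l2norm a / cmod (a 0)"

lemma e0_norm_const_nonneg: "0 \<le> e0_norm_const"
  using l2norm_nonneg[OF weights_l2] by (simp add: e0_norm_const_def)

lemma poly_op_head_norm_le:
  fixes N :: nat
  assumes q: "coeff q 0 = 0" and f: "f \<in> l2"
  defines "h \<equiv> \<lambda>n. \<Sum>m<N. f m * basis_vec m n"
  shows "poly_op a q h \<in> l2" "l2norm (poly_op a q h) \<le> e0_norm_const * l2norm (poly_op a q e0) * l2norm f"
proof -
  define V where "V = l2norm (poly_op a q e0)"
  have V: "0 \<le> V" unfolding V_def by (rule l2norm_nonneg[OF poly_op_l2(1)[OF e0_l2(1)]])
  have e: "poly_op a q h = (\<lambda>n. \<Sum>m<N. f m * poly_op a q (basis_vec m) n)"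
    unfolding h_def by (rule ext) (rule poly_op_sum_right)
  have S: "poly_op a q h \<in> l2"
    "l2norm (poly_op a q h) \<le> (\<Sum>m<N. cmod (f m) * l2norm (poly_op a q (basis_vec m)))"
    unfolding e using l2_sum[of "{..<N}" "\<lambda>m. poly_op a q (basis_vec m)" f]
      poly_op_basis_vec_norm_le(1)[OF q] by auto
  then show "poly_op a q h \<in> l2" by simp
  have "(\<Sum>m<N. cmod (f m) * l2norm (poly_op a q (basis_vec m)))
      \<le> (\<Sum>m<N. cmod (f m) * (cmod (a m) / cmod (a 0) * V))"
    using poly_op_basis_vec_norm_le(2)[OF q] by (intro sum_mono mult_left_mono) (auto simp: V_def)
  also have "\<dots> = V / cmod (a 0) * (\<Sum>m<N. \<bar>cmod (f m)\<bar> * \<bar>cmod (a m)\<bar>)"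
    by (simp add: sum_distrib_left mult_ac)
  also have "\<dots> \<le> V / cmod (a 0) * (L2_set (\<lambda>n. cmod (f n)) {..<N} * L2_set (\<lambda>n. cmod (a n)) {..<N})"
    by (rule mult_left_mono[OF L2_set_mult_ineq]) (simp add: V)
  also have "\<dots> \<le> V / cmod (a 0) * (l2norm f * l2norm a)"
    using f weights_l2 V
    by (intro mult_left_mono mult_mono L2_set_le_l2norm l2norm_nonneg L2_set_nonneg) auto
  also have "\<dots> = e0_norm_const * V * l2norm f" by (simp add: e0_norm_const_def)
  finally show "l2norm (poly_op a q h) \<le> e0_norm_const * l2norm (poly_op a q e0) * l2norm f"
    using S(2) unfolding V_def by linarith
qed

lemma poly_op_norm_le_e0:
  assumes q: "coeff q 0 = 0" and f: "f \<in> l2"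
  shows "l2norm (poly_op a q f) \<le> e0_norm_const * l2norm (poly_op a q e0) * l2norm f"
proof (rule le_of_forall_pos_le_add_mult[where K = "poly_op_bound q"])
  fix d :: real assume "0 < d"
  then obtain N where N: "l2norm (\<lambda>n. if n < N then 0 else f n) < d"
    using l2_tail_small[OF f] by blast
  define h where "h = (\<lambda>n. \<Sum>m<N. f m * basis_vec m n)"
  define t where "t = (\<lambda>n. if n < N then 0 else f n)"
  have t: "t \<in> l2" using l2_dominated(1)[OF f, of t 1] by (simp add: t_def)
  have "h n = (if n < N then f n else 0)" for n
    unfolding h_def basis_vec_def by (simp add: if_distrib sum.delta' cong: if_cong)
  then have "t = (\<lambda>n. f n - h n)" by (auto simp: t_def)
  then have split: "poly_op a q f n = poly_op a q h n + poly_op a q t n" for n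
    by (simp add: poly_op_diff_right)
  have "l2norm (poly_op a q f) \<le> l2norm (poly_op a q h) + l2norm (poly_op a q t)"
    using poly_op_head_norm_le(1)[OF q f, of N, folded h_def] poly_op_l2(1)[OF t, of q]
    by (rule l2_triangle_pointwise(2)) (simp add: split norm_triangle_ineq)
  also have "\<dots> \<le> e0_norm_const * l2norm (poly_op a q e0) * l2norm f + poly_op_bound q * l2norm t"
    using poly_op_head_norm_le(2)[OF q f, of N, folded h_def] poly_op_l2(2)[OF t, of q]
    by (rule add_mono)
  also have "poly_op_bound q * l2norm t \<le> d * poly_op_bound q"
    using mult_left_mono[OF less_imp_le[OF N] poly_op_bound_nonneg[of q]]
    by (simp add: t_def mult.commute)
  finally show "l2norm (poly_op a q f) \<le> e0_norm_const * l2norm (poly_op a q e0) * l2norm f + d * poly_op_bound q"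
    by simp
qed


section \<open>The algebra A_T\<close>

lemma alg_T_l2: "X \<in> alg_T a \<Longrightarrow> f \<in> l2 \<Longrightarrow> X f \<in> l2"
  by (simp add: alg_T_def)

lemma alg_T_approx:
  assumes "X \<in> alg_T a" "0 < d"
  obtains q where "coeff q 0 = 0" "op_dist_le X (poly_op a q) d"
  using assms unfolding alg_T_def by blast

lemma alg_TI:
  assumes "\<And>f. f \<in> l2 \<Longrightarrow> X f \<in> l2"
    and "\<And>d. 0 < d \<Longrightarrow> d \<le> 1 \<Longrightarrow> \<exists>q. coeff q 0 = 0 \<and> op_dist_le X (poly_op a q) (d * K)"
  shows "X \<in> alg_T a"
  unfolding alg_T_def mem_Collect_eq
proof (intro conjI allI impI ballI)
  fix eps :: real assume "0 < eps"
  then obtain d where d: "0 < d" "d \<le> 1" "d * K \<le> eps" by (rule ex_pos_le_one_mult_le)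
  then show "\<exists>q. coeff q 0 = 0 \<and> op_dist_le X (poly_op a q) eps"
    using assms(2) op_dist_le_mono by meson
qed (rule assms(1))

lemma poly_op_in_alg_T: "coeff q 0 = 0 \<Longrightarrow> poly_op a q \<in> alg_T a"
  unfolding alg_T_def op_dist_le_def using poly_op_l2(1) l2norm_nonneg by auto

lemma wshift_funpow_in_alg_T: "0 < m \<Longrightarrow> T ^^ m \<in> alg_T a"
  using poly_op_in_alg_T[of "monom 1 m"] by (simp add: poly_op_monom_1)

lemma zero_in_alg_T: "(\<lambda>f n. 0) \<in> alg_T a"
proof -
  have "poly_op a 0 = (\<lambda>f n. 0)" by (simp add: fun_eq_iff poly_op_0)
  then show ?thesis using poly_op_in_alg_T[of 0] by simp
qed

lemma alg_T_bounded:
  assumes "X \<in> alg_T a"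
  obtains B where "0 \<le> B" "\<And>f. f \<in> l2 \<Longrightarrow> l2norm (X f) \<le> B * l2norm f"
proof -
  obtain q where q: "op_dist_le X (poly_op a q) 1" using alg_T_approx[OF assms, of 1] by auto
  have "l2norm (X f) \<le> (poly_op_bound q + 1) * l2norm f" if "f \<in> l2" for f
    using op_dist_le_norm_le[OF q that alg_T_l2[OF assms that] poly_op_l2(1)[OF that]]
      poly_op_l2(2)[OF that, of q] by (simp add: distrib_right)
  then show ?thesis using that[of "poly_op_bound q + 1"] poly_op_bound_nonneg[of q] by simp
qed

lemma poly_op_approx_norm_le:
  assumes X: "X \<in> alg_T a" and p: "op_dist_le X (poly_op a p) d"
    and B: "\<And>f. f \<in> l2 \<Longrightarrow> l2norm (X f) \<le> B * l2norm f" and g: "g \<in> l2"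
  shows "l2norm (poly_op a p g) \<le> (B + d) * l2norm g"
  using op_dist_le_norm_le[OF op_dist_le_commute[THEN iffD1, OF p] g poly_op_l2(1)[OF g]
      alg_T_l2[OF X g]] B[OF g] by (simp add: distrib_right)

lemma alg_T_add:
  assumes X: "X \<in> alg_T a" and Y: "Y \<in> alg_T a"
  shows "(\<lambda>f n. X f n + Y f n) \<in> alg_T a"
proof (rule alg_TI[where K = 2])
  show "(\<lambda>n. X f n + Y f n) \<in> l2" if "f \<in> l2" for f
    using l2_add(1) alg_T_l2 X Y that by blast
  fix d :: real assume "0 < d"
  obtain p where p: "coeff p 0 = 0" "op_dist_le X (poly_op a p) d" using alg_T_approx[OF X \<open>0 < d\<close>] .
  obtain q where q: "coeff q 0 = 0" "op_dist_le Y (poly_op a q) d" using alg_T_approx[OF Y \<open>0 < d\<close>] .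
  have "l2norm (\<lambda>n. X f n + Y f n - poly_op a (p + q) f n) \<le> d * 2 * l2norm f" if f: "f \<in> l2" for f
  proof -
    have dp: "(\<lambda>n. X f n - poly_op a p f n) \<in> l2" and dq: "(\<lambda>n. Y f n - poly_op a q f n) \<in> l2"
      using l2_diff(1) alg_T_l2 poly_op_l2(1) X Y f by blast+
    have "l2norm (\<lambda>n. X f n + Y f n - poly_op a (p + q) f n)
        \<le> l2norm (\<lambda>n. X f n - poly_op a p f n) + l2norm (\<lambda>n. Y f n - poly_op a q f n)"
      by (rule l2_triangle_pointwise(2)[OF dp dq])
        (simp add: poly_op_add add_diff_add norm_triangle_ineq)
    also have "\<dots> \<le> d * l2norm f + d * l2norm f"
      by (rule add_mono[OF op_dist_leD[OF p(2) f] op_dist_leD[OF q(2) f]])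
    finally show ?thesis by simp
  qed
  then show "\<exists>r. coeff r 0 = 0 \<and> op_dist_le (\<lambda>f n. X f n + Y f n) (poly_op a r) (d * 2)"
    using p q by (intro exI[of _ "p + q"]) (simp add: op_dist_le_def)
qed

lemma alg_T_scale:
  assumes X: "X \<in> alg_T a"
  shows "(\<lambda>f n. c * X f n) \<in> alg_T a"
proof (rule alg_TI[where K = "cmod c"])
  show "(\<lambda>n. c * X f n) \<in> l2" if "f \<in> l2" for f
    using l2_scale(1) alg_T_l2 X that by blast
  fix d :: real assume "0 < d"
  obtain p where p: "coeff p 0 = 0" "op_dist_le X (poly_op a p) d" using alg_T_approx[OF X \<open>0 < d\<close>] .
  have "l2norm (\<lambda>n. c * X f n - poly_op a (smult c p) f n) \<le> d * cmod c * l2norm f" if f: "f \<in> l2" for f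
  proof -
    have dp: "(\<lambda>n. X f n - poly_op a p f n) \<in> l2"
      using l2_diff(1) alg_T_l2 poly_op_l2(1) X f by blast
    have "(\<lambda>n. c * X f n - poly_op a (smult c p) f n) = (\<lambda>n. c * (X f n - poly_op a p f n))"
      by (simp add: poly_op_smult right_diff_distrib)
    then have "l2norm (\<lambda>n. c * X f n - poly_op a (smult c p) f n)
        = cmod c * l2norm (\<lambda>n. X f n - poly_op a p f n)"
      by (simp add: l2_scale(2)[OF dp])
    also have "\<dots> \<le> cmod c * (d * l2norm f)"
      by (rule mult_left_mono[OF op_dist_leD[OF p(2) f]]) simp
    finally show ?thesis by (simp add: mult_ac)
  qed
  then show "\<exists>r. coeff r 0 = 0 \<and> op_dist_le (\<lambda>f n. c * X f n) (poly_op a r) (d * cmod c)"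
    using p by (intro exI[of _ "smult c p"]) (simp add: op_dist_le_def)
qed

lemma alg_T_diff:
  assumes "X \<in> alg_T a" "Y \<in> alg_T a"
  shows "(\<lambda>f n. X f n - Y f n) \<in> alg_T a"
  using alg_T_add[OF assms(1) alg_T_scale[OF assms(2), of "-1"]] by simp

lemma alg_T_comp:
  assumes X: "X \<in> alg_T a" and Y: "Y \<in> alg_T a"
  shows "X \<circ> Y \<in> alg_T a"
proof -
  obtain BX where BX: "0 \<le> BX" "\<And>f. f \<in> l2 \<Longrightarrow> l2norm (X f) \<le> BX * l2norm f"
    using alg_T_bounded[OF X] by blast
  obtain BY where BY: "0 \<le> BY" "\<And>f. f \<in> l2 \<Longrightarrow> l2norm (Y f) \<le> BY * l2norm f"
    using alg_T_bounded[OF Y] by blast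
  show ?thesis
  proof (rule alg_TI[where K = "BY + BX + 1"])
    show "(X \<circ> Y) f \<in> l2" if "f \<in> l2" for f
      using alg_T_l2 X Y that by simp
    fix d :: real assume d: "0 < d" "d \<le> 1"
    obtain p where p: "coeff p 0 = 0" "op_dist_le X (poly_op a p) d" using alg_T_approx[OF X d(1)] .
    obtain q where q: "coeff q 0 = 0" "op_dist_le Y (poly_op a q) d" using alg_T_approx[OF Y d(1)] .
    have "l2norm (\<lambda>n. X (Y f) n - poly_op a p (poly_op a q f) n) \<le> d * (BY + BX + 1) * l2norm f"
      if f: "f \<in> l2" for f
    proof -
      have Yf: "Y f \<in> l2" and qf: "poly_op a q f \<in> l2" and dq: "(\<lambda>n. Y f n - poly_op a q f n) \<in> l2"
        using alg_T_l2[OF Y f] poly_op_l2(1)[OF f] l2_diff(1) by auto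
      have "l2norm (\<lambda>n. X (Y f) n - poly_op a p (poly_op a q f) n)
          \<le> l2norm (\<lambda>n. X (Y f) n - poly_op a p (Y f) n)
            + l2norm (\<lambda>n. poly_op a p (Y f) n - poly_op a p (poly_op a q f) n)"
        by (rule l2norm_diff_triangle[OF alg_T_l2[OF X Yf] poly_op_l2(1)[OF Yf] poly_op_l2(1)[OF qf]])
      also have "\<dots> \<le> d * l2norm (Y f) + (BX + d) * l2norm (\<lambda>n. Y f n - poly_op a q f n)"
        unfolding poly_op_diff_right_fun
        by (rule add_mono[OF op_dist_leD[OF p(2) Yf] poly_op_approx_norm_le[OF X p(2) BX(2) dq]])
      also have "\<dots> \<le> d * (BY * l2norm f) + (BX + d) * (d * l2norm f)"
        using op_dist_leD[OF q(2) f] BY(2)[OF f] BX(1) d by (intro add_mono mult_left_mono) auto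
      also have "\<dots> = d * (BY + BX + d) * l2norm f" by (simp add: algebra_simps)
      also have "\<dots> \<le> d * (BY + BX + 1) * l2norm f"
        using d l2norm_nonneg[OF f] by (intro mult_right_mono mult_left_mono) auto
      finally show ?thesis .
    qed
    then show "\<exists>r. coeff r 0 = 0 \<and> op_dist_le (X \<circ> Y) (poly_op a r) (d * (BY + BX + 1))"
      using p q by (intro exI[of _ "p * q"]) (simp add: op_dist_le_def poly_op_mult coeff_mult_0)
  qed
qed

lemma alg_T_diff_right:
  assumes X: "X \<in> alg_T a" and f: "f \<in> l2" and g: "g \<in> l2"
  shows "X (\<lambda>n. f n - g n) = (\<lambda>n. X f n - X g n)"
proof -
  have fg: "(\<lambda>n. f n - g n) \<in> l2" by (rule l2_diff(1)[OF f g])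
  have Xfg: "(\<lambda>n. X f n - X g n) \<in> l2" using l2_diff(1) alg_T_l2 X f g by blast
  show ?thesis
  proof (rule l2_eqI_approx[OF alg_T_l2[OF X fg] Xfg])
    fix d :: real assume "0 < d"
    obtain p where p: "op_dist_le X (poly_op a p) d" using alg_T_approx[OF X \<open>0 < d\<close>] by blast
    define err where "err h = (\<lambda>n. X h n - poly_op a p h n)" for h
    have err: "err h \<in> l2" "l2norm (err h) \<le> d * l2norm h" if "h \<in> l2" for h
      using l2_diff(1) alg_T_l2[OF X that] poly_op_l2(1)[OF that] op_dist_leD[OF p that]
      unfolding err_def by blast+
    have "(\<lambda>n. X (\<lambda>n. f n - g n) n - (X f n - X g n))
        = (\<lambda>n. err (\<lambda>n. f n - g n) n - (err f n - err g n))"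
      by (simp add: fun_eq_iff err_def poly_op_diff_right)
    then have "l2norm (\<lambda>n. X (\<lambda>n. f n - g n) n - (X f n - X g n))
        \<le> l2norm (err (\<lambda>n. f n - g n)) + (l2norm (err f) + l2norm (err g))"
      using l2_diff(2)[OF err(1)[OF fg] l2_diff(1)[OF err(1)[OF f] err(1)[OF g]]]
        l2_diff(2)[OF err(1)[OF f] err(1)[OF g]] by simp
    also have "\<dots> \<le> d * (l2norm (\<lambda>n. f n - g n) + l2norm f + l2norm g)"
      using err(2)[OF fg] err(2)[OF f] err(2)[OF g] by (simp add: algebra_simps)
    finally show "l2norm (\<lambda>n. X (\<lambda>n. f n - g n) n - (X f n - X g n))
        \<le> d * (l2norm (\<lambda>n. f n - g n) + l2norm f + l2norm g)" .
  qed
qed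

lemma alg_T_commute_poly_op:
  assumes X: "X \<in> alg_T a" and f: "f \<in> l2"
  shows "X (poly_op a q f) = poly_op a q (X f)"
proof -
  have qf: "poly_op a q f \<in> l2" and Xf: "X f \<in> l2" using poly_op_l2(1) alg_T_l2 X f by blast+
  show ?thesis
  proof (rule l2_eqI_approx[OF alg_T_l2[OF X qf] poly_op_l2(1)[OF Xf]])
    fix d :: real assume "0 < d"
    obtain p where p: "op_dist_le X (poly_op a p) d" using alg_T_approx[OF X \<open>0 < d\<close>] by blast
    have dp: "(\<lambda>n. poly_op a p f n - X f n) \<in> l2" using l2_diff(1) poly_op_l2(1)[OF f] Xf by blast
    have "l2norm (\<lambda>n. X (poly_op a q f) n - poly_op a q (X f) n)
        \<le> l2norm (\<lambda>n. X (poly_op a q f) n - poly_op a p (poly_op a q f) n)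
          + l2norm (poly_op a q (\<lambda>n. poly_op a p f n - X f n))"
      using l2norm_diff_triangle[OF alg_T_l2[OF X qf] poly_op_l2(1)[OF qf, of p] poly_op_l2(1)[OF Xf, of q]]
      by (simp add: poly_op_commute[of a p q] poly_op_diff_right_fun)
    also have "\<dots> \<le> d * l2norm (poly_op a q f) + poly_op_bound q * (d * l2norm f)"
    proof -
      have "l2norm (\<lambda>n. poly_op a p f n - X f n) \<le> d * l2norm f"
        using op_dist_leD[OF p f] by (simp add: l2norm_diff_commute[of "poly_op a p f"])
      then show ?thesis
        using op_dist_leD[OF p qf] poly_op_l2(2)[OF dp, of q]
          mult_left_mono[OF _ poly_op_bound_nonneg[of q]] by fastforce
    qed
    also have "\<dots> = d * (l2norm (poly_op a q f) + poly_op_bound q * l2norm f)"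
      by (simp add: algebra_simps)
    finally show "l2norm (\<lambda>n. X (poly_op a q f) n - poly_op a q (X f) n)
        \<le> d * (l2norm (poly_op a q f) + poly_op_bound q * l2norm f)" .
  qed
qed

lemma alg_T_commute:
  assumes X: "X \<in> alg_T a" and Y: "Y \<in> alg_T a" and f: "f \<in> l2"
  shows "X (Y f) = Y (X f)"
proof -
  obtain B where B: "0 \<le> B" "\<And>f. f \<in> l2 \<Longrightarrow> l2norm (Y f) \<le> B * l2norm f"
    using alg_T_bounded[OF Y] by blast
  have Xf: "X f \<in> l2" and Yf: "Y f \<in> l2" using alg_T_l2 X Y f by blast+
  show ?thesis
  proof (rule l2_eqI_approx[OF alg_T_l2[OF X Yf] alg_T_l2[OF Y Xf]])
    fix d :: real assume "0 < d"
    obtain p where p: "op_dist_le X (poly_op a p) d" using alg_T_approx[OF X \<open>0 < d\<close>] by blast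
    have pf: "poly_op a p f \<in> l2" and dp: "(\<lambda>n. poly_op a p f n - X f n) \<in> l2"
      using poly_op_l2(1)[OF f] l2_diff(1) Xf by blast+
    have "l2norm (\<lambda>n. X (Y f) n - Y (X f) n)
        \<le> l2norm (\<lambda>n. X (Y f) n - poly_op a p (Y f) n) + l2norm (Y (\<lambda>n. poly_op a p f n - X f n))"
      using l2norm_diff_triangle[OF alg_T_l2[OF X Yf] poly_op_l2(1)[OF Yf, of p] alg_T_l2[OF Y Xf]]
      by (simp add: alg_T_commute_poly_op[OF Y f, symmetric] alg_T_diff_right[OF Y pf Xf])
    also have "\<dots> \<le> d * l2norm (Y f) + B * (d * l2norm f)"
    proof -
      have "l2norm (\<lambda>n. poly_op a p f n - X f n) \<le> d * l2norm f"
        using op_dist_leD[OF p f] by (simp add: l2norm_diff_commute[of "poly_op a p f"])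
      then show ?thesis
        using op_dist_leD[OF p Yf] B(2)[OF dp] mult_left_mono[OF _ B(1)] by fastforce
    qed
    also have "\<dots> = d * (l2norm (Y f) + B * l2norm f)" by (simp add: algebra_simps)
    finally show "l2norm (\<lambda>n. X (Y f) n - Y (X f) n) \<le> d * (l2norm (Y f) + B * l2norm f)" .
  qed
qed

lemma alg_T_norm_le_e0:
  assumes Z: "Z \<in> alg_T a" and f: "f \<in> l2"
  shows "l2norm (Z f) \<le> e0_norm_const * l2norm (Z e0) * l2norm f"
proof (rule le_of_forall_pos_le_add_mult[where K = "(e0_norm_const + 1) * l2norm f"])
  fix d :: real assume d: "0 < d"
  obtain p where p: "coeff p 0 = 0" "op_dist_le Z (poly_op a p) d" using alg_T_approx[OF Z d] .
  have "l2norm (poly_op a p e0) \<le> l2norm (Z e0) + d"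
    using op_dist_le_norm_le[OF op_dist_le_commute[THEN iffD1, OF p(2)] e0_l2(1)
        poly_op_l2(1)[OF e0_l2(1)] alg_T_l2[OF Z e0_l2(1)]] e0_l2(2) by simp
  then have "e0_norm_const * l2norm (poly_op a p e0) * l2norm f
      \<le> e0_norm_const * (l2norm (Z e0) + d) * l2norm f"
    using e0_norm_const_nonneg l2norm_nonneg[OF f] by (intro mult_right_mono mult_left_mono)
  moreover have "l2norm (Z f) \<le> l2norm (poly_op a p f) + d * l2norm f"
    by (rule op_dist_le_norm_le[OF p(2) f alg_T_l2[OF Z f] poly_op_l2(1)[OF f]])
  ultimately show "l2norm (Z f) \<le> e0_norm_const * l2norm (Z e0) * l2norm f + d * ((e0_norm_const + 1) * l2norm f)"
    using poly_op_norm_le_e0[OF p(1) f] by (simp add: algebra_simps)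
qed

section \<open>The closed ideal generated by an element\<close>

lemma cyclic_subspaceD:
  assumes "x \<in> cyclic_subspace a v" "0 < e"
  obtains p where "l2norm (\<lambda>n. x n - poly_op a p v n) \<le> e"
proof -
  obtain p where "l2norm (\<lambda>n. x n - poly_op a p v n) < e"
    using assms unfolding cyclic_subspace_def by blast
  then show ?thesis using that[of p] by simp
qed

lemma cyclic_subspace_zero: "(\<lambda>n. 0) \<in> cyclic_subspace a v"
  unfolding cyclic_subspace_def by (intro CollectI allI impI exI[of _ 0]) (simp add: poly_op_0)

lemma cyclic_subspace_self: "v \<in> cyclic_subspace a v"
  unfolding cyclic_subspace_def by (intro CollectI allI impI exI[of _ "[:1:]"]) (simp add: poly_op_const)

lemma cyclic_subspace_add:
  assumes v: "v \<in> l2" and x: "x \<in> l2" "x \<in> cyclic_subspace a v"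
    and y: "y \<in> l2" "y \<in> cyclic_subspace a v"
  shows "(\<lambda>n. x n + y n) \<in> cyclic_subspace a v"
proof (rule cyclic_subspaceI[where K = 2])
  fix d :: real assume "0 < d"
  obtain p where p: "l2norm (\<lambda>n. x n - poly_op a p v n) \<le> d" using cyclic_subspaceD[OF x(2) \<open>0 < d\<close>] .
  obtain q where q: "l2norm (\<lambda>n. y n - poly_op a q v n) \<le> d" using cyclic_subspaceD[OF y(2) \<open>0 < d\<close>] .
  have "l2norm (\<lambda>n. x n + y n - poly_op a (p + q) v n)
      \<le> l2norm (\<lambda>n. x n - poly_op a p v n) + l2norm (\<lambda>n. y n - poly_op a q v n)"
    by (rule l2_triangle_pointwise(2)[OF l2_diff(1)[OF x(1) poly_op_l2(1)[OF v]]
          l2_diff(1)[OF y(1) poly_op_l2(1)[OF v]]])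
      (simp add: poly_op_add add_diff_add norm_triangle_ineq)
  then show "\<exists>r. l2norm (\<lambda>n. x n + y n - poly_op a r v n) \<le> d * 2"
    using p q by (intro exI[of _ "p + q"]) linarith
qed

lemma cyclic_subspace_scale:
  assumes v: "v \<in> l2" and x: "x \<in> l2" "x \<in> cyclic_subspace a v"
  shows "(\<lambda>n. c * x n) \<in> cyclic_subspace a v"
proof (rule cyclic_subspaceI[where K = "cmod c"])
  fix d :: real assume "0 < d"
  obtain p where p: "l2norm (\<lambda>n. x n - poly_op a p v n) \<le> d" using cyclic_subspaceD[OF x(2) \<open>0 < d\<close>] .
  have "(\<lambda>n. c * x n - poly_op a (smult c p) v n) = (\<lambda>n. c * (x n - poly_op a p v n))"
    by (simp add: poly_op_smult right_diff_distrib)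
  then have "l2norm (\<lambda>n. c * x n - poly_op a (smult c p) v n) = cmod c * l2norm (\<lambda>n. x n - poly_op a p v n)"
    by (simp add: l2_scale(2)[OF l2_diff(1)[OF x(1) poly_op_l2(1)[OF v]]])
  also have "\<dots> \<le> d * cmod c" using mult_left_mono[OF p, of "cmod c"] by (simp add: mult.commute)
  finally show "\<exists>r. l2norm (\<lambda>n. c * x n - poly_op a r v n) \<le> d * cmod c" by blast
qed

lemma cyclic_subspace_closed:
  assumes x: "x \<in> l2" and v: "v \<in> l2"
    and approx: "\<And>e. 0 < e \<Longrightarrow> \<exists>y\<in>l2 \<inter> cyclic_subspace a v. l2norm (\<lambda>n. x n - y n) \<le> e"
  shows "x \<in> cyclic_subspace a v"
proof (rule cyclic_subspaceI[where K = 2])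
  fix d :: real assume "0 < d"
  obtain y where y: "y \<in> l2" "y \<in> cyclic_subspace a v" "l2norm (\<lambda>n. x n - y n) \<le> d"
    using approx[OF \<open>0 < d\<close>] by blast
  obtain p where p: "l2norm (\<lambda>n. y n - poly_op a p v n) \<le> d" using cyclic_subspaceD[OF y(2) \<open>0 < d\<close>] .
  have "l2norm (\<lambda>n. x n - poly_op a p v n) \<le> l2norm (\<lambda>n. x n - y n) + l2norm (\<lambda>n. y n - poly_op a p v n)"
    by (rule l2norm_diff_triangle[OF x y(1) poly_op_l2(1)[OF v]])
  then show "\<exists>p. l2norm (\<lambda>n. x n - poly_op a p v n) \<le> d * 2"
    using y(3) p by (intro exI[of _ p]) linarith
qed

lemma cyclic_subspace_alg_T:
  assumes A: "A \<in> alg_T a" and v: "v \<in> l2" and x: "x \<in> l2" "x \<in> cyclic_subspace a v"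
  shows "A x \<in> cyclic_subspace a v"
proof -
  obtain B where B: "0 \<le> B" "\<And>f. f \<in> l2 \<Longrightarrow> l2norm (A f) \<le> B * l2norm f"
    using alg_T_bounded[OF A] by blast
  show ?thesis
  proof (rule cyclic_subspaceI[where K = "l2norm x + B + 1"])
    fix d :: real assume d: "0 < d" "d \<le> 1"
    obtain p where p: "op_dist_le A (poly_op a p) d" using alg_T_approx[OF A d(1)] by blast
    obtain q where q: "l2norm (\<lambda>n. x n - poly_op a q v n) \<le> d" using cyclic_subspaceD[OF x(2) d(1)] .
    have qv: "poly_op a q v \<in> l2" and dq: "(\<lambda>n. x n - poly_op a q v n) \<in> l2"
      using poly_op_l2(1)[OF v] l2_diff(1)[OF x(1)] by blast+
    have "l2norm (\<lambda>n. A x n - poly_op a p (poly_op a q v) n)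
        \<le> l2norm (\<lambda>n. A x n - poly_op a p x n) + l2norm (\<lambda>n. poly_op a p x n - poly_op a p (poly_op a q v) n)"
      by (rule l2norm_diff_triangle[OF alg_T_l2[OF A x(1)] poly_op_l2(1)[OF x(1)] poly_op_l2(1)[OF qv]])
    also have "\<dots> \<le> d * l2norm x + (B + d) * d"
    proof (rule add_mono)
      show "l2norm (\<lambda>n. A x n - poly_op a p x n) \<le> d * l2norm x"
        using p x(1) by (simp add: op_dist_le_def)
      have "l2norm (poly_op a p (\<lambda>n. x n - poly_op a q v n)) \<le> (B + d) * l2norm (\<lambda>n. x n - poly_op a q v n)"
        by (rule poly_op_approx_norm_le[OF A p B(2) dq])
      also have "\<dots> \<le> (B + d) * d" using q B(1) d(1) by (intro mult_left_mono) auto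
      finally show "l2norm (\<lambda>n. poly_op a p x n - poly_op a p (poly_op a q v) n) \<le> (B + d) * d"
        unfolding poly_op_diff_right_fun .
    qed
    also have "\<dots> \<le> d * (l2norm x + B + 1)"
      using d mult_right_mono[of d 1 d] by (simp add: algebra_simps)
    finally show "\<exists>r. l2norm (\<lambda>n. A x n - poly_op a r v n) \<le> d * (l2norm x + B + 1)"
      by (intro exI[of _ "p * q"]) (simp add: poly_op_mult)
  qed
qed

definition cyclic_ideal :: "((nat \<Rightarrow> complex) \<Rightarrow> nat \<Rightarrow> complex) \<Rightarrow> ((nat \<Rightarrow> complex) \<Rightarrow> nat \<Rightarrow> complex) set"
  where "cyclic_ideal R = {X \<in> alg_T a. X e0 \<in> cyclic_subspace a (R e0)}"

lemma closed_ideal_cyclic_ideal: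
  assumes R: "R \<in> alg_T a"
  shows "closed_ideal a (cyclic_ideal R)"
proof -
  have v: "R e0 \<in> l2" by (rule alg_T_l2[OF R e0_l2(1)])
  have Xe: "X e0 \<in> l2" "X \<in> alg_T a" "X e0 \<in> cyclic_subspace a (R e0)" if "X \<in> cyclic_ideal R" for X
    using that alg_T_l2 e0_l2(1) by (auto simp: cyclic_ideal_def)
  show ?thesis
    unfolding closed_ideal_def
  proof (intro conjI ballI allI impI)
    show "cyclic_ideal R \<subseteq> alg_T a" by (auto simp: cyclic_ideal_def)
    show "(\<lambda>f n. 0) \<in> cyclic_ideal R"
      by (simp add: cyclic_ideal_def zero_in_alg_T cyclic_subspace_zero)
  next
    fix S Q assume S: "S \<in> cyclic_ideal R" and Q: "Q \<in> cyclic_ideal R"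
    show "(\<lambda>f n. S f n + Q f n) \<in> cyclic_ideal R"
      using alg_T_add[OF Xe(2)[OF S] Xe(2)[OF Q]]
        cyclic_subspace_add[OF v Xe(1,3)[OF S] Xe(1,3)[OF Q]] by (simp add: cyclic_ideal_def)
  next
    fix c S assume S: "S \<in> cyclic_ideal R"
    show "(\<lambda>f n. c * S f n) \<in> cyclic_ideal R"
      using alg_T_scale[OF Xe(2)[OF S]] cyclic_subspace_scale[OF v Xe(1,3)[OF S]]
      by (simp add: cyclic_ideal_def)
  next
    fix S A assume S: "S \<in> cyclic_ideal R" and A: "A \<in> alg_T a"
    have "A (S e0) \<in> cyclic_subspace a (R e0)"
      by (rule cyclic_subspace_alg_T[OF A v Xe(1,3)[OF S]])
    then show "A \<circ> S \<in> cyclic_ideal R" "S \<circ> A \<in> cyclic_ideal R"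
      using alg_T_comp[OF A Xe(2)[OF S]] alg_T_comp[OF Xe(2)[OF S] A]
        alg_T_commute[OF Xe(2)[OF S] A e0_l2(1)] by (simp_all add: cyclic_ideal_def)
  next
    fix S assume S: "S \<in> alg_T a" and approx: "\<forall>eps>0. \<exists>Q\<in>cyclic_ideal R. op_dist_le S Q eps"
    have "S e0 \<in> cyclic_subspace a (R e0)"
    proof (rule cyclic_subspace_closed[OF alg_T_l2[OF S e0_l2(1)] v])
      fix e :: real assume "0 < e"
      then obtain Q where "Q \<in> cyclic_ideal R" "op_dist_le S Q e" using approx by blast
      then show "\<exists>y\<in>l2 \<inter> cyclic_subspace a (R e0). l2norm (\<lambda>n. S e0 n - y n) \<le> e"
        using Xe(1,3) e0_l2 by (intro bexI[of _ "Q e0"]) (auto simp: op_dist_le_def)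
    qed
    then show "S \<in> cyclic_ideal R" using S by (simp add: cyclic_ideal_def)
  qed
qed

lemma alg_T_op_dist_le_e0:
  assumes "X \<in> alg_T a" "Y \<in> alg_T a"
  shows "op_dist_le X Y (e0_norm_const * l2norm (\<lambda>n. X e0 n - Y e0 n))"
  unfolding op_dist_le_def using alg_T_norm_le_e0[OF alg_T_diff[OF assms]] by simp

lemma closed_ideal_poly_op_comp:
  assumes J: "closed_ideal a J" and R: "R \<in> J"
  shows "(\<lambda>f. poly_op a p (R f)) \<in> J"
proof -
  define p' where "p' = p - [:coeff p 0:]"
  have "coeff p' 0 = 0" by (simp add: p'_def)
  then have "poly_op a p' \<in> alg_T a" by (rule poly_op_in_alg_T)
  then have "(\<lambda>f n. coeff p 0 * R f n + (poly_op a p' \<circ> R) f n) \<in> J"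
    using R by (intro closed_idealD(2,3,4)[OF J])
  moreover have "(\<lambda>f n. coeff p 0 * R f n + (poly_op a p' \<circ> R) f n) = (\<lambda>f. poly_op a p (R f))"
    by (simp add: fun_eq_iff p'_def poly_op_diff poly_op_const)
  ultimately show ?thesis by simp
qed

lemma cyclic_ideal_subset:
  assumes J: "closed_ideal a J" and R: "R \<in> J"
  shows "cyclic_ideal R \<subseteq> J"
proof
  fix X assume "X \<in> cyclic_ideal R"
  then have X: "X \<in> alg_T a" and Xc: "X e0 \<in> cyclic_subspace a (R e0)"
    by (auto simp: cyclic_ideal_def)
  have JA: "J \<subseteq> alg_T a" by (rule closed_idealD(1)[OF J])
  have "\<exists>Y\<in>J. op_dist_le X Y eps" if "0 < eps" for eps
  proof -
    have "0 < eps / (e0_norm_const + 1)" using that e0_norm_const_nonneg by simp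
    then obtain p where p: "l2norm (\<lambda>n. X e0 n - poly_op a p (R e0) n) \<le> eps / (e0_norm_const + 1)"
      using cyclic_subspaceD[OF Xc] by blast
    define Y where "Y = (\<lambda>f. poly_op a p (R f))"
    have Y: "Y \<in> J" unfolding Y_def by (rule closed_ideal_poly_op_comp[OF J R])
    have "e0_norm_const * l2norm (\<lambda>n. X e0 n - Y e0 n) \<le> (e0_norm_const + 1) * (eps / (e0_norm_const + 1))"
      using p e0_norm_const_nonneg l2norm_nonneg[OF l2_diff(1)[OF alg_T_l2[OF X e0_l2(1)]
          poly_op_l2(1)[OF alg_T_l2[OF subsetD[OF JA R] e0_l2(1)]]]]
      by (intro mult_mono) (auto simp: Y_def)
    also have "\<dots> = eps" using e0_norm_const_nonneg by simp
    finally have "op_dist_le X Y eps"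
      using op_dist_le_mono[OF alg_T_op_dist_le_e0[OF X]] Y JA by blast
    then show ?thesis using Y by blast
  qed
  then show "X \<in> J" by (rule closed_idealD(5)[OF J X])
qed

lemma gen_ideal_eq_cyclic_ideal:
  assumes "R \<in> alg_T a"
  shows "gen_ideal a R = cyclic_ideal R"
proof
  show "gen_ideal a R \<subseteq> cyclic_ideal R"
    using closed_ideal_gen_ideal_least[OF closed_ideal_cyclic_ideal[OF assms]] assms
    by (simp add: cyclic_ideal_def cyclic_subspace_self)
  show "cyclic_ideal R \<subseteq> gen_ideal a R"
    unfolding gen_ideal_def using cyclic_ideal_subset by blast
qed

lemma gen_ideal_subset_iff:
  assumes X: "X \<in> alg_T a" and R: "R \<in> alg_T a"
  shows "gen_ideal a X \<subseteq> gen_ideal a R \<longleftrightarrow> X e0 \<in> cyclic_subspace a (R e0)"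
proof
  assume "gen_ideal a X \<subseteq> gen_ideal a R"
  moreover have "X \<in> gen_ideal a X"
    using X by (simp add: gen_ideal_eq_cyclic_ideal cyclic_ideal_def cyclic_subspace_self)
  ultimately show "X e0 \<in> cyclic_subspace a (R e0)"
    using R by (auto simp: gen_ideal_eq_cyclic_ideal cyclic_ideal_def)
next
  assume "X e0 \<in> cyclic_subspace a (R e0)"
  then have "X \<in> gen_ideal a R" using X R by (simp add: gen_ideal_eq_cyclic_ideal cyclic_ideal_def)
  then show "gen_ideal a X \<subseteq> gen_ideal a R"
    using closed_ideal_gen_ideal_least closed_ideal_cyclic_ideal[OF R] R
    by (simp add: gen_ideal_eq_cyclic_ideal)
qed

end


section \<open>Fourier coefficients\<close>

definition fourier_integrand ::
  "((nat \<Rightarrow> complex) \<Rightarrow> nat \<Rightarrow> complex) \<Rightarrow> (nat \<Rightarrow> complex) \<Rightarrow> (nat \<Rightarrow> complex) \<Rightarrow> nat \<Rightarrow> real \<Rightarrow> complex"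
  where "fourier_integrand X f g j t = l2inner (gauge_act (cis t) X f) g * cnj (cis t) ^ j"

lemma cis_power_mult_cnj_power:
  "cis t ^ i * cnj (cis t) ^ j = exp (t *\<^sub>R (\<i> * of_int (int i - int j)))"
proof -
  have "cis t ^ i * cnj (cis t) ^ j = cis (real i * t + real j * (- t))"
    unfolding cis_cnj Complex.DeMoivre cis_mult ..
  also have "\<dots> = exp (\<i> * complex_of_real (real i * t + real j * (- t)))" by (rule cis_conv_exp)
  also have "\<i> * complex_of_real (real i * t + real j * (- t)) = t *\<^sub>R (\<i> * of_int (int i - int j))"
    by (simp add: scaleR_conv_of_real algebra_simps)
  finally show ?thesis .
qed

lemma has_integral_exp_int:
  "((\<lambda>t. exp (t *\<^sub>R (\<i> * of_int k))) has_integral (if k = 0 then of_real (2*pi) else 0)) {0..2*pi}"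
proof (cases "k = 0")
  case True
  then show ?thesis using has_integral_const_real[of "1::complex" 0 "2*pi"]
    by (simp add: scaleR_conv_of_real)
next
  case False
  define c where "c = \<i> * of_int k"
  have c: "c \<noteq> 0" using False by (simp add: c_def)
  have "((\<lambda>t. (1 / c) * exp (t *\<^sub>R c)) has_vector_derivative exp (x *\<^sub>R c)) (at x within {0..2*pi})" for x
    using has_vector_derivative_mult_right[OF exp_scaleR_has_vector_derivative_right, of "1 / c" c x]
      c by simp
  then have "((\<lambda>t. exp (t *\<^sub>R c)) has_integral ((1 / c) * exp ((2*pi) *\<^sub>R c) - (1 / c) * exp (0 *\<^sub>R c))) {0..2*pi}"
    by (intro fundamental_theorem_of_calculus) auto
  moreover have "exp ((2*pi) *\<^sub>R c) = 1"
  proof -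
    have "exp ((2*pi) *\<^sub>R c) = cis (2 * pi * of_int k)"
      by (simp add: cis_conv_exp c_def scaleR_conv_of_real algebra_simps)
    also have "\<dots> = 1" by (rule cis_multiple_2pi) simp
    finally show ?thesis .
  qed
  ultimately show ?thesis using False by (simp add: c_def)
qed

lemma has_integral_cis_power:
  "((\<lambda>t. cis t ^ i * cnj (cis t) ^ j) has_integral (if i = j then of_real (2*pi) else 0)) {0..2*pi}"
  using has_integral_exp_int[of "int i - int j"] unfolding cis_power_mult_cnj_power by simp

lemma l2_unimodular_scale:
  assumes "cmod l = 1" "f \<in> l2"
  shows "(\<lambda>n. l ^ n * f n) \<in> l2" "l2norm (\<lambda>n. l ^ n * f n) = l2norm f"
  using l2_cong_cmod[of "\<lambda>n. l ^ n * f n" f] assms by (simp_all add: norm_mult norm_power)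

lemma gauge_act_poly_op:
  assumes l: "cmod l = 1" and D: "degree q < D"
  shows "gauge_act l (poly_op a q) f = (\<lambda>n. \<Sum>i<D. (coeff q i * l ^ i) * (wshift a ^^ i) f n)"
proof
  fix n
  have "l ^ n * (wshift a ^^ i) (\<lambda>m. cnj l ^ m * f m) n = l ^ i * (wshift a ^^ i) f n" for i
  proof (cases "i \<le> n")
    case True
    have "l ^ (n - i) * cnj l ^ (n - i) = 1"
      using complex_norm_square[of l] l by (simp add: power_mult_distrib[symmetric])
    then have "l ^ n * cnj l ^ (n - i) = l ^ i"
      using True by (metis le_add_diff_inverse mult.assoc mult.right_neutral power_add)
    then show ?thesis using True by (simp add: wshift_funpow_apply)
  qed (simp add: wshift_funpow_apply)
  then show "gauge_act l (poly_op a q) f n = (\<Sum>i<D. (coeff q i * l ^ i) * (wshift a ^^ i) f n)"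
    by (simp add: gauge_act_def poly_op_eq_sum[OF D] sum_distrib_left mult_ac)
qed

context weighted_shift
begin

lemma has_integral_fourier_integrand_poly_op:
  assumes f: "f \<in> l2" and g: "g \<in> l2"
  shows "(fourier_integrand (poly_op a q) f g j has_integral
          (of_real (2*pi) * (coeff q j * l2inner ((T ^^ j) f) g))) {0..2*pi}"
proof -
  define D where "D = Suc (max (degree q) j)"
  have D: "degree q < D" "j < D" by (auto simp: D_def)
  define L where "L i = l2inner ((T ^^ i) f) g" for i
  have "fourier_integrand (poly_op a q) f g j
      = (\<lambda>t. \<Sum>i<D. (coeff q i * L i) * (cis t ^ i * cnj (cis t) ^ j))"
  proof
    fix t
    have "l2inner (gauge_act (cis t) (poly_op a q) f) g = (\<Sum>i<D. (coeff q i * cis t ^ i) * L i)"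
      unfolding gauge_act_poly_op[OF norm_cis D(1)] L_def
      by (rule l2inner_sum_left[OF _ _ g]) (use wshift_funpow_l2(1)[OF f, where s=0] in auto)
    then show "fourier_integrand (poly_op a q) f g j t = (\<Sum>i<D. (coeff q i * L i) * (cis t ^ i * cnj (cis t) ^ j))"
      by (simp add: fourier_integrand_def sum_distrib_left sum_distrib_right mult_ac)
  qed
  moreover have "((\<lambda>t. \<Sum>i<D. (coeff q i * L i) * (cis t ^ i * cnj (cis t) ^ j)) has_integral
          (\<Sum>i<D. (coeff q i * L i) * (if i = j then of_real (2*pi) else 0))) {0..2*pi}"
    by (intro has_integral_sum finite_lessThan has_integral_mult_right has_integral_cis_power)
  moreover have "(\<Sum>i<D. (coeff q i * L i) * (if i = j then of_real (2*pi) else 0))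
      = of_real (2*pi) * (coeff q j * L j)"
    using D(2) by (simp add: if_distrib sum.delta' cong: if_cong)
  ultimately show ?thesis by (simp add: L_def)
qed

lemma fourier_integrand_approx:
  assumes X: "X \<in> alg_T a" and q: "op_dist_le X (poly_op a q) d" and f: "f \<in> l2" and g: "g \<in> l2"
  shows "cmod (fourier_integrand X f g j t - fourier_integrand (poly_op a q) f g j t)
    \<le> d * (l2norm f * l2norm g)"
proof -
  define l where "l = cis t"
  have l: "cmod l = 1" "cmod (cnj l) = 1" by (simp_all add: l_def)
  define h where "h = (\<lambda>m. cnj l ^ m * f m)"
  have h: "h \<in> l2" "l2norm h = l2norm f" unfolding h_def using l2_unimodular_scale[OF l(2) f] by auto
  have dh: "(\<lambda>n. X h n - poly_op a q h n) \<in> l2"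
    using l2_diff(1) alg_T_l2[OF X h(1)] poly_op_l2(1)[OF h(1)] by blast
  have "l2inner (gauge_act l X f) g - l2inner (gauge_act l (poly_op a q) f) g
      = l2inner (\<lambda>n. l ^ n * (X h n - poly_op a q h n)) g"
    using l2inner_diff_left[OF l2_unimodular_scale(1)[OF l(1) alg_T_l2[OF X h(1)]]
        l2_unimodular_scale(1)[OF l(1) poly_op_l2(1)[OF h(1)]] g]
    by (simp add: gauge_act_def h_def right_diff_distrib)
  also have "cmod \<dots> \<le> l2norm (\<lambda>n. X h n - poly_op a q h n) * l2norm g"
    using norm_l2inner_le[OF l2_unimodular_scale(1)[OF l(1) dh] g] l2_unimodular_scale(2)[OF l(1) dh]
    by simp
  also have "\<dots> \<le> d * l2norm f * l2norm g"
    using mult_right_mono[OF op_dist_leD[OF q h(1)] l2norm_nonneg[OF g]] h(2) by simp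
  finally show ?thesis
    by (simp add: fourier_integrand_def l_def[symmetric] left_diff_distrib[symmetric] norm_mult
        norm_power mult.assoc l(1))
qed

lemma fourier_integrand_integrable:
  assumes X: "X \<in> alg_T a" and f: "f \<in> l2" and g: "g \<in> l2"
  shows "fourier_integrand X f g j integrable_on {0..2*pi}"
proof (rule integrable_uniform_limit_real)
  fix e :: real assume "0 < e"
  define B where "B = l2norm f * l2norm g"
  have B: "0 \<le> B" using l2norm_nonneg f g by (simp add: B_def)
  obtain d where d: "0 < d" "d \<le> 1" "d * B \<le> e" using ex_pos_le_one_mult_le[OF \<open>0 < e\<close>] .
  obtain q where q: "op_dist_le X (poly_op a q) d" using alg_T_approx[OF X d(1)] by blast
  have "\<forall>t\<in>{0..2*pi}. cmod (fourier_integrand X f g j t - fourier_integrand (poly_op a q) f g j t) \<le> e"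
    using fourier_integrand_approx[OF X q f g] d(3) B_def by (meson order_trans)
  moreover have "fourier_integrand (poly_op a q) f g j integrable_on {0..2*pi}"
    using has_integral_fourier_integrand_poly_op[OF f g] by blast
  ultimately show "\<exists>h. (\<forall>t\<in>{0..2*pi}. norm (fourier_integrand X f g j t - h t) \<le> e) \<and> h integrable_on {0..2*pi}"
    by blast
qed

lemma fourier_integral_approx:
  assumes X: "X \<in> alg_T a" and q: "op_dist_le X (poly_op a q) d" and f: "f \<in> l2" and g: "g \<in> l2"
    and d: "0 \<le> d"
  shows "cmod (of_real (1 / (2 * pi)) * integral {0..2*pi} (fourier_integrand X f g j)
      - coeff q j * l2inner ((T ^^ j) f) g) \<le> d * (l2norm f * l2norm g)"
proof -
  define L where "L = coeff q j * l2inner ((T ^^ j) f) g"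
  define I where "I = integral {0..2*pi} (fourier_integrand X f g j)"
  have hI: "((\<lambda>t. fourier_integrand X f g j t - fourier_integrand (poly_op a q) f g j t)
      has_integral (I - of_real (2*pi) * L)) {0..2*pi}"
    unfolding I_def L_def
    by (intro has_integral_diff integrable_integral fourier_integrand_integrable[OF X f g]
        has_integral_fourier_integrand_poly_op[OF f g])
  have B: "0 \<le> d * (l2norm f * l2norm g)"
    using d l2norm_nonneg[OF f] l2norm_nonneg[OF g] by simp
  have "cmod (I - of_real (2*pi) * L) \<le> d * (l2norm f * l2norm g) * (2 * pi)"
    using has_integral_bound_real[OF B finite.emptyI hI fourier_integrand_approx[OF X q f g]] by simp
  moreover have "of_real (1 / (2 * pi)) * I - L = of_real (1 / (2 * pi)) * (I - of_real (2*pi) * L)"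
    by (simp add: field_simps)
  moreover have "cmod (of_real (1 / (2 * pi)) * z) = cmod z / (2 * pi)" for z
    by (simp add: norm_mult norm_divide)
  ultimately have "cmod (of_real (1 / (2 * pi)) * I - L) \<le> d * (l2norm f * l2norm g) * (2 * pi) / (2 * pi)"
    by (metis divide_right_mono pi_ge_zero zero_le_mult_iff zero_le_numeral)
  then show ?thesis by (simp add: I_def L_def)
qed

lemma alg_T_e0_approx:
  assumes X: "X \<in> alg_T a" and q: "op_dist_le X (poly_op a q) d"
  shows "cmod (X e0 j - coeff q j * weight_prod a j) \<le> d"
proof -
  have "cmod (X e0 j - poly_op a q e0 j) \<le> l2norm (\<lambda>n. X e0 n - poly_op a q e0 n)"
    by (rule cmod_le_l2norm[OF l2_diff(1)[OF alg_T_l2[OF X e0_l2(1)] poly_op_l2(1)[OF e0_l2(1)]]])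
  also have "\<dots> \<le> d" using op_dist_leD[OF q e0_l2(1)] e0_l2(2) by simp
  finally show ?thesis by (simp add: poly_op_e0)
qed

lemma alg_T_e0_zero:
  assumes X: "X \<in> alg_T a"
  shows "X e0 0 = 0"
proof -
  have "cmod (X e0 0) \<le> 0"
  proof (rule le_of_forall_pos_le_add_mult[where K = 1])
    fix d :: real assume "0 < d"
    then obtain q where "coeff q 0 = 0" "op_dist_le X (poly_op a q) d" using alg_T_approx[OF X] by blast
    then show "cmod (X e0 0) \<le> 0 + d * 1" using alg_T_e0_approx[OF X, of q d 0] by simp
  qed
  then show ?thesis by simp
qed

lemma fourier_integral_eq:
  assumes X: "X \<in> alg_T a" and f: "f \<in> l2" and g: "g \<in> l2"
  shows "of_real (1 / (2 * pi)) * integral {0..2*pi} (fourier_integrand X f g j)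
    = (X e0 j / weight_prod a j) * l2inner ((T ^^ j) f) g"
proof -
  define I where "I = of_real (1 / (2 * pi)) * integral {0..2*pi} (fourier_integrand X f g j)"
  define L where "L = l2inner ((T ^^ j) f) g"
  define c where "c = X e0 j / weight_prod a j"
  have W: "0 < cmod (weight_prod a j)" using weight_prod_nonzero by simp
  have "cmod (I - c * L) \<le> 0"
  proof (rule le_of_forall_pos_le_add_mult[where K = "l2norm f * l2norm g + cmod L / cmod (weight_prod a j)"])
    fix d :: real assume "0 < d"
    then obtain q where q: "op_dist_le X (poly_op a q) d" using alg_T_approx[OF X] by blast
    have "cmod (coeff q j - c) = cmod (coeff q j * weight_prod a j - X e0 j) / cmod (weight_prod a j)"
      using weight_prod_nonzero by (simp add: c_def norm_divide[symmetric] field_simps)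
    also have "\<dots> \<le> d / cmod (weight_prod a j)"
      using alg_T_e0_approx[OF X q, of j] W by (simp add: divide_right_mono norm_minus_commute)
    finally have "cmod ((coeff q j - c) * L) \<le> d / cmod (weight_prod a j) * cmod L"
      unfolding norm_mult by (rule mult_right_mono) simp
    moreover have "cmod (I - coeff q j * L) \<le> d * (l2norm f * l2norm g)"
      unfolding I_def L_def using fourier_integral_approx[OF X q f g] \<open>0 < d\<close> by simp
    moreover have "cmod (I - c * L) \<le> cmod (I - coeff q j * L) + cmod ((coeff q j - c) * L)"
      by (rule order_trans[OF _ norm_triangle_ineq]) (simp add: algebra_simps)
    ultimately show "cmod (I - c * L) \<le> 0 + d * (l2norm f * l2norm g + cmod L / cmod (weight_prod a j))"
      by (simp add: algebra_simps)
  qed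
  then show ?thesis by (simp add: I_def c_def L_def)
qed

lemma fourier_coeff_eq:
  assumes X: "X \<in> alg_T a"
  shows "fourier_coeff a X j = X e0 j / weight_prod a j"
  unfolding fourier_coeff_def fourier_integrand_def[symmetric]
proof (rule the_equality)
  show "\<forall>f\<in>l2. \<forall>g\<in>l2. of_real (1 / (2 * pi)) * integral {0..2*pi} (fourier_integrand X f g j)
      = (X e0 j / weight_prod a j) * l2inner ((T ^^ j) f) g"
    using fourier_integral_eq[OF X] by blast
next
  fix c assume "\<forall>f\<in>l2. \<forall>g\<in>l2. of_real (1 / (2 * pi)) * integral {0..2*pi} (fourier_integrand X f g j)
      = c * l2inner ((T ^^ j) f) g"
  then have "of_real (1 / (2 * pi)) * integral {0..2*pi} (fourier_integrand X e0 (basis_vec j) j)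
      = c * l2inner ((T ^^ j) e0) (basis_vec j)"
    using e0_l2(1) basis_vec_l2(1) by blast
  then have "c * l2inner ((T ^^ j) e0) (basis_vec j) = (X e0 j / weight_prod a j) * l2inner ((T ^^ j) e0) (basis_vec j)"
    using fourier_integral_eq[OF X e0_l2(1) basis_vec_l2(1)] by simp
  moreover have "l2inner ((T ^^ j) e0) (basis_vec j) = weight_prod a j"
    by (simp add: l2inner_basis_vec wshift_funpow_e0)
  ultimately show "c = X e0 j / weight_prod a j"
    using weight_prod_nonzero[of j] by (simp add: eq_divide_eq)
qed

end


section \<open>The ideals generated by S and by T^k\<close>

context weighted_shift
begin

lemma vanishing_below_in_cyclic_subspace:
  assumes s: "s \<in> l2" and vanish: "\<And>n. n < k \<Longrightarrow> s n = 0"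
  shows "s \<in> cyclic_subspace a ((T ^^ k) e0)"
  unfolding cyclic_subspace_iff_sums
proof (intro allI impI)
  fix eps :: real assume "0 < eps"
  then obtain N where N: "l2norm (\<lambda>n. if n < N then 0 else s n) < eps"
    using l2_tail_small[OF s] by blast
  define c where "c m = s (m + k) / weight_prod a (m + k)" for m
  have Tk: "(T ^^ m) ((T ^^ k) e0) = (\<lambda>n. if n = m + k then weight_prod a (m + k) else 0)" for m
    using wshift_funpow_e0[where a = a and i = "m + k"] by (simp add: funpow_add)
  have sum: "(\<Sum>m<N. c m * (T ^^ m) ((T ^^ k) e0) n) = (if k \<le> n \<and> n - k < N then s n else 0)" for n
  proof -
    have "(\<Sum>m<N. c m * (T ^^ m) ((T ^^ k) e0) n)
        = (\<Sum>m<N. if m = n - k \<and> k \<le> n then c m * weight_prod a (m + k) else 0)"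
      unfolding Tk by (rule sum.cong) auto
    also have "\<dots> = (if k \<le> n \<and> n - k < N then s n else 0)"
      by (cases "k \<le> n") (simp_all add: sum.delta' c_def weight_prod_nonzero)
    finally show ?thesis .
  qed
  have "l2norm (\<lambda>n. s n - (\<Sum>m<N. c m * (T ^^ m) ((T ^^ k) e0) n))
      \<le> 1 * l2norm (\<lambda>n. if n < N then 0 else s n)"
    using l2_dominated(1)[OF s, of "\<lambda>n. if n < N then 0 else s n" 1]
    by (intro l2_dominated(2)) (auto simp: sum vanish)
  then show "\<exists>N c. l2norm (\<lambda>n. s n - (\<Sum>m<N. c m * (T ^^ m) ((T ^^ k) e0) n)) < eps"
    using N by (intro exI[of _ N] exI[of _ c]) simp
qed

lemma wshift_funpow_e0_in_cyclic_subspace_iff: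
  assumes v: "v \<in> l2"
  shows "(T ^^ k) e0 \<in> cyclic_subspace a v \<longleftrightarrow> basis_vec k \<in> cyclic_subspace a v"
proof -
  have Tk: "(T ^^ k) e0 = (\<lambda>n. weight_prod a k * basis_vec k n)"
    unfolding wshift_funpow_e0 by (auto simp: basis_vec_def)
  then have ek: "basis_vec k = (\<lambda>n. (1 / weight_prod a k) * (T ^^ k) e0 n)"
    using weight_prod_nonzero[of k] by simp
  have Tk_l2: "(T ^^ k) e0 \<in> l2" using wshift_funpow_l2(1)[OF e0_l2(1), where s=0] by simp
  show ?thesis
  proof
    assume "(T ^^ k) e0 \<in> cyclic_subspace a v"
    from cyclic_subspace_scale[OF v Tk_l2 this, of "1 / weight_prod a k"] show "basis_vec k \<in> cyclic_subspace a v"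
      unfolding ek[symmetric] .
  next
    assume "basis_vec k \<in> cyclic_subspace a v"
    from cyclic_subspace_scale[OF v basis_vec_l2(1) this, of "weight_prod a k"] show "(T ^^ k) e0 \<in> cyclic_subspace a v"
      unfolding Tk[symmetric] .
  qed
qed

end

theorem mainTheorem12:
  fixes a :: "nat \<Rightarrow> complex"
    and S :: "(nat \<Rightarrow> complex) \<Rightarrow> (nat \<Rightarrow> complex)"
    and k :: nat
  assumes "\<forall>n. a n \<noteq> 0"
    and "\<forall>n. cmod (a (Suc n)) \<le> cmod (a n)"
    and "summable (\<lambda>n. (cmod (a n))^2)"
    and "S \<in> alg_T a"
    and "k > 1"
    and "\<forall>j\<in>{1..k-1}. fourier_coeff a S j = 0"
    and "fourier_coeff a S k \<noteq> 0"
  shows "gen_ideal a S = gen_ideal a (wshift a ^^ k) \<longleftrightarrow>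
         (\<forall>eps>0. \<exists>N c. l2norm (\<lambda>n. basis_vec k n -
            (\<Sum>m<N. c m * (wshift a ^^ m) (S (basis_vec 0)) n)) < eps)"
proof -
  interpret weighted_shift a using assms(1-3) by unfold_locales
  have S: "S \<in> alg_T a" and Tk: "T ^^ k \<in> alg_T a"
    using assms(4,5) wshift_funpow_in_alg_T by auto
  have Se0: "S e0 \<in> l2" by (rule alg_T_l2[OF S e0_l2(1)])
  have "S e0 n = 0" if "n < k" for n
    using alg_T_e0_zero[OF S] assms(6) that weight_prod_nonzero[of n]
    by (cases "n = 0") (auto simp: fourier_coeff_eq[OF S])
  then have "gen_ideal a S \<subseteq> gen_ideal a (T ^^ k)"
    using gen_ideal_subset_iff[OF S Tk] vanishing_below_in_cyclic_subspace[OF Se0] by blast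
  moreover have "gen_ideal a (T ^^ k) \<subseteq> gen_ideal a S \<longleftrightarrow> basis_vec k \<in> cyclic_subspace a (S e0)"
    using gen_ideal_subset_iff[OF Tk S] wshift_funpow_e0_in_cyclic_subspace_iff[OF Se0] by simp
  ultimately have "gen_ideal a S = gen_ideal a (T ^^ k) \<longleftrightarrow> basis_vec k \<in> cyclic_subspace a (S e0)"
    by blast
  then show ?thesis by (simp add: cyclic_subspace_iff_sums)
qed

end
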